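(* Fix $N\ge1$. For $i\ge1$ let $f_i,g_i,h_i$ be modular forms of weight $i$ on $\Gamma_1(N)$, let $u,v\ge1$, $w\ge1$ with $f_u\ne0$, $g_v\ne0$, and suppose $f_u^vg_v^{-u}$ is not constant. Then the functions $f=\sum_{i=1}^uf_i$, $g=\sum_{i=1}^vg_i$ and $h=E_2+\sum_{i=1}^wh_i$ are algebraically independent over $\mathbb{C}$.
   Context: $E_2(z)=1-24\sum_{n\ge1}\sigma_1(n)q^n$, $q=e^{2\pi iz}$, $\sigma_1(n)=\sum_{d\mid n}d$. *)

theory Defs
  imports "HOL-Complex_Analysis.Complex_Analysis" "HOL-Number_Theory.Number_Theory"
begin

definition upper_half_plane :: "complex set" where
  "upper_half_plane = {z. Im z > 0}"

definition SL2Z :: "(int \<times> int \<times> int \<times> int) set" where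
  "SL2Z = {(a,b,c,d). a*d - b*c = 1}"

definition Gamma1 :: "nat \<Rightarrow> (int \<times> int \<times> int \<times> int) set" where
  "Gamma1 N = {(a,b,c,d). a*d - b*c = 1 \<and> [a = 1] (mod int N) \<and> [d = 1] (mod int N)
                \<and> [c = 0] (mod int N)}"

definition moebius_act :: "int \<times> int \<times> int \<times> int \<Rightarrow> complex \<Rightarrow> complex" where
  "moebius_act M z = (case M of (a,b,c,d) \<Rightarrow>
      (of_int a * z + of_int b) / (of_int c * z + of_int d))"

definition automorphy_factor :: "int \<times> int \<times> int \<times> int \<Rightarrow> complex \<Rightarrow> complex" where
  "automorphy_factor M z = (case M of (a,b,c,d) \<Rightarrow> of_int c * z + of_int d)"

text \<open>Modular form of weight k on Gamma_1(N): holomorphic on the upper half-plane,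
  invariant under the weight-k slash action of Gamma_1(N), and holomorphic at every cusp,
  i.e. for every gamma in SL2(Z) the slashed function (cz+d)^(-k) f(gamma z) is bounded
  as Im z tends to infinity.\<close>
definition modular_form :: "nat \<Rightarrow> nat \<Rightarrow> (complex \<Rightarrow> complex) \<Rightarrow> bool" where
  "modular_form N k f \<longleftrightarrow>
     f holomorphic_on upper_half_plane \<and>
     (\<forall>M\<in>Gamma1 N. \<forall>z\<in>upper_half_plane.
        f (moebius_act M z) = automorphy_factor M z ^ k * f z) \<and>
     (\<forall>M\<in>SL2Z. \<exists>B y0. \<forall>z. Im z \<ge> y0 \<longrightarrow>
        norm (f (moebius_act M z)) \<le> B * norm (automorphy_factor M z) ^ k)"

definition sigma1 :: "nat \<Rightarrow> nat" where
  "sigma1 n = (\<Sum>d\<in>{d. d dvd n}. d)"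

definition Eisenstein_E2 :: "complex \<Rightarrow> complex" where
  "Eisenstein_E2 z = 1 - 24 * (\<Sum>n. of_nat (sigma1 (Suc n)) * exp (2 * pi * \<i> * z) ^ Suc n)"

definition alg_indep3 :: "(complex \<Rightarrow> complex) \<Rightarrow> (complex \<Rightarrow> complex) \<Rightarrow> (complex \<Rightarrow> complex) \<Rightarrow> bool" where
  "alg_indep3 f g h \<longleftrightarrow>
     (\<forall>(S :: (nat \<times> nat \<times> nat) set) (c :: nat \<times> nat \<times> nat \<Rightarrow> complex). finite S \<longrightarrow>
        (\<forall>z\<in>upper_half_plane.
           (\<Sum>(a,b,e)\<in>S. c (a,b,e) * f z ^ a * g z ^ b * h z ^ e) = 0) \<longrightarrow>
        (\<forall>m\<in>S. c m = 0))"

end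

theory Submission
  imports Defs "HOL-Computational_Algebra.Polynomial"
begin

text \<open>Let \<open>P(f, g, h) = 0\<close> on the upper half-plane. For \<open>N | c\<close> the matrix \<open>(1, n; c, c n + 1)\<close> lies
  in \<open>\<Gamma>\<^sub>1(N)\<close>, and with its automorphy factor \<open>X = c (z + n) + 1\<close> the functions \<open>f\<close> and \<open>g\<close> become
  polynomials \<open>F\<^sub>z(X)\<close> and \<open>G\<^sub>z(X)\<close> with top coefficients \<open>f\<^sub>u(z)\<close> and \<open>g\<^sub>v(z)\<close>, while by the transformation
  law of \<open>E\<^sub>2\<close> the function \<open>h\<close> becomes \<open>X\<^sup>2 E\<^sub>2(z) + H\<^sub>z(X) - (6 i / \<pi>) c X\<close>. As \<open>n\<close> and \<open>c\<close> range
  over infinite sets, \<open>P(F\<^sub>z(X), G\<^sub>z(X), T)\<close> vanishes for all \<open>X \<noteq> 0\<close> and all \<open>T\<close>. Its coefficient of a power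
  of \<open>T\<close>, and then its part of top weight in \<open>X\<close>, is a weighted homogeneous relation between \<open>f\<^sub>u\<close>
  and \<open>g\<^sub>v\<close>; so \<open>f\<^sub>u\<^sup>v / g\<^sub>v\<^sup>u\<close> takes finitely many values near a point, hence is constant.
  The transformation law of \<open>E\<^sub>2\<close> is derived from the Eisenstein series \<open>G\<^sub>2\<close>, summed in two orders.\<close>

section \<open>Partial fractions for the cotangent\<close>

definition pi_cot :: "complex \<Rightarrow> complex" where
  "pi_cot w = of_real pi * cot (of_real pi * w)"

definition pi_csc_sq :: "complex \<Rightarrow> complex" where
  "pi_csc_sq w = of_real pi ^ 2 / sin (of_real pi * w) ^ 2"

lemma sin_pi_times_eq_0_iff: "sin (of_real pi * w) = 0 \<longleftrightarrow> (w::complex) \<in> \<int>"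
proof
  assume "sin (of_real pi * w) = 0"
  then obtain n :: int where "of_real pi * w = of_real (of_int n * pi)" using sin_eq_0 by blast
  then have "w = of_int n" by (simp add: field_simps)
  then show "w \<in> \<int>" by simp
next
  assume "w \<in> \<int>"
  then obtain n where "w = of_int n" by (auto elim: Ints_cases)
  then show "sin (of_real pi * w) = 0"
    using sin_eq_0[of "of_real pi * w"] by (auto simp: mult.commute)
qed

lemma not_Ints_if_Im_nonzero: "Im w \<noteq> 0 \<Longrightarrow> (w::complex) \<notin> \<int>"
  by (simp add: complex_is_Int_iff)

lemma Im_minus_inverse_pos:
  assumes "Im z > 0"
  shows "Im (- 1 / z) > 0"
proof -
  have "Im (- 1 / z) = Im z / ((Re z)\<^sup>2 + (Im z)\<^sup>2)" by (simp add: Im_divide)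
  moreover have "(Re z)\<^sup>2 + (Im z)\<^sup>2 > 0" using assms by (simp add: add_nonneg_pos)
  ultimately show ?thesis using assms by simp
qed

lemma one_minus_not_Ints: "(z::complex) \<notin> \<int> \<Longrightarrow> 1 - z \<notin> \<int>"
  using Ints_diff[of 1 "1 - z"] by auto

lemma pi_cot_plus_1: "pi_cot (w + 1) = pi_cot w"
  by (simp add: pi_cot_def cot_def distrib_left sin_add cos_add)

lemma pi_cot_minus: "pi_cot (- w) = - pi_cot w"
  by (simp add: pi_cot_def cot_def)

lemma pi_csc_sq_minus: "pi_csc_sq (- w) = pi_csc_sq w"
  by (simp add: pi_csc_sq_def)

lemma Digamma_reflection_complex:
  fixes z :: complex
  assumes z: "z \<notin> \<int>"
  shows "Digamma (1 - z) = Digamma z + pi_cot z"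
proof -
  have s: "sin (of_real pi * z) \<noteq> 0" using z by (simp add: sin_pi_times_eq_0_iff)
  have z1: "1 - z \<notin> \<int>" using z by (rule one_minus_not_Ints)
  define S where "S = {w::complex. sin (of_real pi * w) \<noteq> 0}"
  have S: "open S" "z \<in> S"
    using s unfolding S_def by (auto intro!: open_Collect_neq continuous_intros)
  have "((\<lambda>w. of_real pi / sin (of_real pi * w)) has_field_derivative
      (- (of_real pi ^ 2 * cos (of_real pi * z) / sin (of_real pi * z) ^ 2))) (at z)"
    using s by (auto intro!: derivative_eq_intros simp: power2_eq_square)
  then have D: "((\<lambda>w. Gamma w * Gamma (1 - w)) has_field_derivative
      (- (of_real pi ^ 2 * cos (of_real pi * z) / sin (of_real pi * z) ^ 2))) (at z)"
    by (rule has_field_derivative_transform_within_open[OF _ S])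
       (simp add: Gamma_reflection_complex)
  have "((\<lambda>w. Gamma w * Gamma (1 - w)) has_field_derivative
      Gamma z * Gamma (1 - z) * (Digamma z - Digamma (1 - z))) (at z)"
    using z z1 nonpos_Ints_subset_Ints
    by (auto intro!: derivative_eq_intros simp: algebra_simps)
  from DERIV_unique[OF this D] have
    "of_real pi / sin (of_real pi * z) * (Digamma z - Digamma (1 - z))
       = - (of_real pi ^ 2 * cos (of_real pi * z) / sin (of_real pi * z) ^ 2)"
    by (simp add: Gamma_reflection_complex)
  also have "\<dots> = of_real pi / sin (of_real pi * z) * (- pi_cot z)"
    using s by (simp add: pi_cot_def cot_def field_simps power2_eq_square)
  finally have "Digamma z - Digamma (1 - z) = - pi_cot z" using s by (subst (asm) mult_left_cancel) auto
  then show ?thesis by (simp add: algebra_simps)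
qed

lemma Polygamma_1_reflection_complex:
  fixes z :: complex
  assumes z: "z \<notin> \<int>"
  shows "Polygamma 1 z + Polygamma 1 (1 - z) = pi_csc_sq z"
proof -
  have s: "sin (of_real pi * z) \<noteq> 0" using z by (simp add: sin_pi_times_eq_0_iff)
  have z1: "1 - z \<notin> \<int>" using z by (rule one_minus_not_Ints)
  define S where "S = {w::complex. w \<notin> \<int>}"
  have S: "open S" "z \<in> S"
    using z unfolding S_def sin_pi_times_eq_0_iff[symmetric]
    by (auto intro!: open_Collect_neq continuous_intros)
  have "((\<lambda>w. - pi_cot w) has_field_derivative pi_csc_sq z) (at z)"
  proof -
    have "((\<lambda>w. - of_real pi * cot (of_real pi * w)) has_field_derivative
        - of_real pi * (- inverse (sin (of_real pi * z) ^ 2) * of_real pi)) (at z)"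
      by (intro DERIV_cmult DERIV_chain2[where f = cot and g = "\<lambda>w. of_real pi * w", OF DERIV_cot[OF s]]) (auto intro!: derivative_eq_intros)
    then show ?thesis by (simp add: pi_cot_def pi_csc_sq_def field_simps power2_eq_square)
  qed
  moreover have "- pi_cot x = Digamma x - Digamma (1 - x)" if "x \<in> S" for x
  proof -
    have "x \<notin> \<int>" using that by (simp add: S_def)
    from Digamma_reflection_complex[OF this] show ?thesis by simp
  qed
  ultimately have D: "((\<lambda>w. Digamma w - Digamma (1 - w)) has_field_derivative pi_csc_sq z) (at z)"
    by (rule has_field_derivative_transform_within_open[OF _ S])
  have "((\<lambda>w. Digamma w - Digamma (1 - w)) has_field_derivative
      Polygamma 1 z + Polygamma 1 (1 - z)) (at z)"
    using z z1 nonpos_Ints_subset_Ints by (auto intro!: derivative_eq_intros)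
  from DERIV_unique[OF this D] show ?thesis .
qed

lemma has_sum_int_from_nat_halves:
  fixes f :: "int \<Rightarrow> 'a::topological_comm_monoid_add"
  assumes "((\<lambda>k. f (int k)) has_sum A) UNIV" "((\<lambda>k. f (- int k - 1)) has_sum B) UNIV"
  shows "(f has_sum (A + B)) UNIV"
proof -
  have i1: "inj_on int UNIV" by (simp add: inj_on_def)
  have i2: "inj_on (\<lambda>k::nat. - int k - 1) UNIV" by (simp add: inj_on_def)
  have h1: "(f has_sum A) (range int)"
    using assms(1) by (subst has_sum_reindex[OF i1]) (simp add: o_def)
  have h2: "(f has_sum B) (range (\<lambda>k::nat. - int k - 1))"
    using assms(2) by (subst has_sum_reindex[OF i2]) (simp add: o_def)
  have r1: "range int = {0..}"
    by (auto simp: image_iff dest: zero_le_imp_eq_int)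
  have r2: "range (\<lambda>k::nat. - int k - 1) = {..<0}"
  proof -
    have "x \<in> range (\<lambda>k::nat. - int k - 1)" if "x < 0" for x :: int
    proof -
      have "x = - int (nat (- x - 1)) - 1" using that by simp
      then show ?thesis by blast
    qed
    then show ?thesis by auto
  qed
  have "(f has_sum (A + B)) ({0..} \<union> {..<0})"
    by (rule has_sum_Un_disjoint) (use h1 h2 r1 r2 in auto)
  moreover have "{0..} \<union> {..<(0::int)} = UNIV" by auto
  ultimately show ?thesis by simp
qed

lemma has_sum_diff:
  fixes f g :: "'a \<Rightarrow> 'b::topological_ab_group_add"
  assumes "(f has_sum a) A" "(g has_sum b) A"
  shows "((\<lambda>x. f x - g x) has_sum (a - b)) A"
proof -
  have "((\<lambda>x. - g x) has_sum (- b)) A" using assms(2) by (simp add: has_sum_uminus)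
  from has_sum_add[OF assms(1) this] show ?thesis by simp
qed

lemma has_sum_remove_point:
  fixes f :: "'a \<Rightarrow> 'b::banach"
  assumes "(f has_sum S) A" "x \<in> A"
  shows "(f has_sum (S - f x)) (A - {x})"
proof -
  have "f summable_on (A - {x})"
    using assms(1) by (rule summable_on_subset_banach[OF has_sum_imp_summable]) auto
  then obtain T where T: "(f has_sum T) (A - {x})" by (auto simp: summable_on_def)
  have "(f has_sum (f x + T)) (insert x (A - {x}))" by (rule has_sum_insert[OF _ T]) auto
  then have "(f has_sum (f x + T)) A" using assms(2) by (simp add: insert_absorb)
  then have "S = f x + T" using assms(1) by (rule has_sum_unique[rotated])
  then show ?thesis using T by simp
qed

lemma norm_add_of_nat_ge:
  fixes w :: complex
  assumes "real k \<ge> 2 * norm w"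
  shows "norm (w + of_nat k) \<ge> real k / 2"
proof -
  have "norm (of_nat k :: complex) - norm w \<le> norm (w + of_nat k)"
    by (metis add.commute norm_diff_ineq)
  then show ?thesis using assms by simp
qed

lemma summable_norm_inverse_square_shift:
  fixes w :: complex
  shows "summable (\<lambda>k. norm (1 / (w + of_nat k) ^ 2))"
proof (rule summable_comparison_test_ev)
  show "summable (\<lambda>k::nat. 4 * inverse (real k ^ 2))"
    by (intro summable_mult inverse_power_summable) simp
  have "eventually (\<lambda>k. real k \<ge> 2 * norm w + 1) sequentially"
    by real_asymp
  then show "eventually (\<lambda>k. norm (norm (1 / (w + of_nat k) ^ 2)) \<le> 4 * inverse (real k ^ 2)) sequentially"
  proof eventually_elim
    case (elim k)
    then have k: "real k / 2 \<le> norm (w + of_nat k)" by (intro norm_add_of_nat_ge) simp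
    have kp: "real k > 0" using elim norm_ge_zero[of w] by linarith
    have "(real k / 2)^2 \<le> norm (w + of_nat k) ^ 2"
      using k kp by (intro power_mono) auto
    then have "inverse (norm (w + of_nat k) ^ 2) \<le> inverse ((real k / 2)^2)"
      using kp by (intro le_imp_inverse_le) auto
    then show ?case by (simp add: norm_divide norm_power field_simps)
  qed
qed

lemma summable_norm_inverse_diff_shift:
  fixes a b :: complex
  shows "summable (\<lambda>k. norm (1 / (a + of_nat k) - 1 / (b + of_nat k)))"
proof (rule summable_comparison_test_ev)
  show "summable (\<lambda>k::nat. 4 * norm (b - a) * inverse (real k ^ 2))"
    by (intro summable_mult inverse_power_summable) simp
  have "eventually (\<lambda>k. real k \<ge> 2 * norm a + 2 * norm b + 1) sequentially"
    by real_asymp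
  then show "eventually (\<lambda>k. norm (norm (1 / (a + of_nat k) - 1 / (b + of_nat k))) \<le> 4 * norm (b - a) * inverse (real k ^ 2)) sequentially"
  proof eventually_elim
    case (elim k)
    then have ka: "real k / 2 \<le> norm (a + of_nat k)" by (intro norm_add_of_nat_ge) (use norm_ge_zero[of b] in linarith)
    from elim have kb: "real k / 2 \<le> norm (b + of_nat k)" by (intro norm_add_of_nat_ge) (use norm_ge_zero[of a] in linarith)
    have kp: "real k > 0" using elim norm_ge_zero[of a] norm_ge_zero[of b] by linarith
    have na: "a + of_nat k \<noteq> 0" using ka kp by auto
    have nb: "b + of_nat k \<noteq> 0" using kb kp by auto
    have eq: "1 / (a + of_nat k) - 1 / (b + of_nat k) = (b - a) / ((a + of_nat k) * (b + of_nat k))"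
      using na nb by (simp add: field_simps)
    have "(real k / 2) * (real k / 2) \<le> norm (a + of_nat k) * norm (b + of_nat k)"
      using ka kb kp by (intro mult_mono) auto
    then have "inverse (norm (a + of_nat k) * norm (b + of_nat k)) \<le> inverse ((real k / 2) * (real k / 2))"
      using kp by (intro le_imp_inverse_le) auto
    then have "norm (b - a) * inverse (norm (a + of_nat k) * norm (b + of_nat k)) \<le> norm (b - a) * inverse ((real k / 2) * (real k / 2))"
      by (intro mult_left_mono) auto
    moreover have "norm (1 / (a + of_nat k) - 1 / (b + of_nat k)) = norm (b - a) * inverse (norm (a + of_nat k) * norm (b + of_nat k))"
      by (subst eq) (simp add: norm_divide norm_mult divide_inverse norm_inverse)
    ultimately have "norm (norm (1 / (a + of_nat k) - 1 / (b + of_nat k))) \<le> norm (b - a) * inverse ((real k / 2) * (real k / 2))"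
      by simp
    also have "norm (b - a) * inverse ((real k / 2) * (real k / 2)) = 4 * norm (b - a) * inverse (real k ^ 2)"
      by (simp add: field_simps power2_eq_square)
    finally show ?case .
  qed
qed

lemma Polygamma_1_sums:
  fixes w :: complex
  assumes "w \<noteq> 0"
  shows "(\<lambda>k. 1 / (w + of_nat k) ^ 2) sums Polygamma 1 w"
  using Polygamma_LIMSEQ[OF assms, of 1] by (simp add: divide_inverse power2_eq_square inverse_mult_distrib)

lemma Digamma_diff_sums:
  fixes a b :: complex
  assumes "a \<noteq> 0" "b \<noteq> 0"
  shows "(\<lambda>k. 1 / (a + of_nat k) - 1 / (b + of_nat k)) sums (Digamma b - Digamma a)"
proof -
  have "(\<lambda>k. inverse (of_nat (Suc k)) - inverse (a + of_nat k)) sums (Digamma a + euler_mascheroni)"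
    using summable_Digamma[OF assms(1)] by (simp add: Digamma_def summable_sums)
  moreover have "(\<lambda>k. inverse (of_nat (Suc k)) - inverse (b + of_nat k)) sums (Digamma b + euler_mascheroni)"
    using summable_Digamma[OF assms(2)] by (simp add: Digamma_def summable_sums)
  ultimately show ?thesis by (auto dest: sums_diff simp: divide_inverse)
qed

text \<open>The partial fraction expansions of \<open>\<pi>\<^sup>2 / sin\<^sup>2(\<pi>w)\<close> and of \<open>\<pi> cot(\<pi>w)\<close>: the sums over
  \<open>n \<ge> 0\<close> are values of the digamma and trigamma functions, and the reflection formulas
  combine the halves \<open>n \<ge> 0\<close> and \<open>n < 0\<close>.\<close>

theorem has_sum_inverse_square_shift:
  fixes w :: complex
  assumes w: "w \<notin> \<int>"
  shows "((\<lambda>n::int. 1 / (w + of_int n) ^ 2) has_sum pi_csc_sq w) UNIV"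
proof -
  have w1: "1 - w \<notin> \<int>" using w by (rule one_minus_not_Ints)
  have nz: "w \<noteq> 0" "1 - w \<noteq> 0" using w w1 by auto
  have pos: "((\<lambda>k. 1 / (w + of_int (int k)) ^ 2) has_sum Polygamma 1 w) UNIV"
    using norm_summable_imp_has_sum[OF summable_norm_inverse_square_shift Polygamma_1_sums[OF nz(1)]]
    by simp
  have neg: "((\<lambda>k. 1 / ((1 - w) + of_nat k) ^ 2) has_sum Polygamma 1 (1 - w)) UNIV"
    by (rule norm_summable_imp_has_sum[OF summable_norm_inverse_square_shift Polygamma_1_sums[OF nz(2)]])
  have "1 / ((1 - w) + of_nat k) ^ 2 = 1 / (w + of_int (- int k - 1)) ^ 2" for k
  proof -
    have "(1 - w) + of_nat k = - (w + of_int (- int k - 1))" by simp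
    then show ?thesis by (metis power2_minus)
  qed
  with neg have "((\<lambda>k. 1 / (w + of_int (- int k - 1)) ^ 2) has_sum Polygamma 1 (1 - w)) UNIV"
    by simp
  from has_sum_int_from_nat_halves[OF pos this] show ?thesis
    using Polygamma_1_reflection_complex[OF w] by simp
qed

theorem has_sum_inverse_diff_shift:
  fixes a b :: complex
  assumes a: "a \<notin> \<int>" and b: "b \<notin> \<int>"
  shows "((\<lambda>n::int. 1 / (a + of_int n) - 1 / (b + of_int n)) has_sum (pi_cot a - pi_cot b)) UNIV"
proof -
  have "1 - a \<notin> \<int>" "1 - b \<notin> \<int>" using a b by (auto intro: one_minus_not_Ints)
  then have nz: "a \<noteq> 0" "b \<noteq> 0" "1 - a \<noteq> 0" "1 - b \<noteq> 0" using a b by auto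
  have pos: "((\<lambda>k. 1 / (a + of_int (int k)) - 1 / (b + of_int (int k))) has_sum (Digamma b - Digamma a)) UNIV"
    using norm_summable_imp_has_sum[OF summable_norm_inverse_diff_shift Digamma_diff_sums[OF nz(1,2)]] by simp
  have neg: "((\<lambda>k. 1 / ((1 - b) + of_nat k) - 1 / ((1 - a) + of_nat k)) has_sum (Digamma (1 - a) - Digamma (1 - b))) UNIV"
    by (rule norm_summable_imp_has_sum[OF summable_norm_inverse_diff_shift Digamma_diff_sums[OF nz(4,3)]])
  have "1 / ((1 - b) + of_nat k) - 1 / ((1 - a) + of_nat k) = 1 / (a + of_int (- int k - 1)) - 1 / (b + of_int (- int k - 1))" for k
  proof -
    have e1: "(1 - b) + of_nat k = - (b + of_int (- int k - 1))"
      and e2: "(1 - a) + of_nat k = - (a + of_int (- int k - 1))" by simp_all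
    show ?thesis by (simp only: e1 e2 divide_minus_right) (simp add: algebra_simps)
  qed
  with neg have "((\<lambda>k. 1 / (a + of_int (- int k - 1)) - 1 / (b + of_int (- int k - 1))) has_sum (Digamma (1 - a) - Digamma (1 - b))) UNIV"
    by simp
  from has_sum_int_from_nat_halves[OF pos this] show ?thesis
    by (simp add: Digamma_reflection_complex[OF a] Digamma_reflection_complex[OF b])
qed

section \<open>The Eisenstein series \<open>G\<^sub>2\<close> and its inversion law\<close>

text \<open>Since \<open>1 / W\<^sup>2 (W + 1) = 1 / W\<^sup>2 - (1 / W - 1 / (W + 1))\<close>, this term differs from the term \<open>1 / W\<^sup>2\<close>
  of \<open>G\<^sub>2\<close> by a telescoping one. The double series becomes absolutely convergent, and its row and
  column sums are still partial fraction sums.\<close>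

definition eisenstein_term :: "complex \<Rightarrow> int \<times> int \<Rightarrow> complex" where
  "eisenstein_term \<tau> = (\<lambda>(m, n). 1 / ((of_int m * \<tau> + of_int n) ^ 2 * (of_int m * \<tau> + of_int n + 1)))"

definition lattice_const :: "complex \<Rightarrow> real" where
  "lattice_const z = 2 + (1 + 2 * Re z ^ 2) / Im z ^ 2"

lemma lattice_const_ge_2: "Im z > 0 \<Longrightarrow> lattice_const z \<ge> 2"
  unfolding lattice_const_def by (auto intro!: divide_nonneg_pos)

lemma sum_squares_le_norm_lattice_point:
  fixes z :: complex and m n :: int
  assumes y: "Im z > 0"
  shows "real_of_int m ^ 2 + real_of_int n ^ 2 \<le> lattice_const z * norm (of_int m * z + of_int n) ^ 2"
proof -
  define x where "x = Re z"
  define yy where "yy = Im z"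
  have yy: "yy > 0" using y by (simp add: yy_def)
  have N: "norm (of_int m * z + of_int n) ^ 2 = (real_of_int m * x + real_of_int n) ^ 2 + (real_of_int m * yy) ^ 2"
    by (simp add: cmod_power2 x_def yy_def)
  define A where "A = real_of_int m * x + real_of_int n"
  define B where "B = real_of_int m * yy"
  define c where "c = (1 + 2 * x ^ 2) / yy ^ 2"
  have c0: "c \<ge> 0" unfolding c_def by (auto intro!: divide_nonneg_pos)
  have K: "lattice_const z = 2 + c" by (simp add: lattice_const_def c_def x_def yy_def)
  have n_eq: "real_of_int n = A - real_of_int m * x" by (simp add: A_def)
  have h1: "real_of_int n ^ 2 \<le> 2 * A ^ 2 + 2 * (real_of_int m * x) ^ 2"
  proof -
    have "(A - real_of_int m * x)^2 + (A + real_of_int m * x)^2 = 2 * A ^ 2 + 2 * (real_of_int m * x) ^ 2"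
      by (simp add: power2_eq_square algebra_simps)
    moreover have "(A + real_of_int m * x)^2 \<ge> 0" by simp
    ultimately show ?thesis unfolding n_eq by linarith
  qed
  have h2: "real_of_int m ^ 2 * (1 + 2 * x ^ 2) = c * B ^ 2"
    unfolding c_def B_def using yy by (simp add: field_simps power2_eq_square)
  have "real_of_int m ^ 2 + real_of_int n ^ 2 \<le> 2 * A ^ 2 + c * B ^ 2"
    using h1 h2 by (simp add: algebra_simps power2_eq_square)
  also have "\<dots> \<le> (2 + c) * (A ^ 2 + B ^ 2)"
    using c0 by (simp add: algebra_simps)
  finally show ?thesis by (simp add: K N A_def B_def)
qed

lemma one_plus_mult_one_plus_le:
  fixes a b :: real
  assumes "a \<ge> 0" "b \<ge> 0" "a + b \<ge> 1"
  shows "(1 + a) * (1 + b) \<le> 5 * (a ^ 2 + b ^ 2)"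
proof -
  have s1: "1 \<le> (a + b) ^ 2" using assms by (simp add: one_le_power)
  have s2: "a + b \<le> (a + b) ^ 2" using assms by (simp add: power2_eq_square)
  have s3: "2 * (a * b) \<le> a ^ 2 + b ^ 2"
    using sum_squares_ge_zero[of "a - b" 0] by (simp add: power2_diff algebra_simps power2_eq_square)
  have s4: "(a + b) ^ 2 = a ^ 2 + b ^ 2 + 2 * (a * b)" by (simp add: power2_sum)
  have "(1 + a) * (1 + b) = 1 + (a + b) + a * b" by (simp add: algebra_simps)
  moreover have aux: "\<And>S s t Q r :: real. 1 \<le> S \<Longrightarrow> s \<le> S \<Longrightarrow> 2 * t \<le> Q \<Longrightarrow> S = Q + 2 * t \<Longrightarrow> r = 1 + s + t \<Longrightarrow> r \<le> 5 * Q"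
    by linarith
  ultimately show ?thesis using aux[OF s1 s2 s3 s4] by simp
qed

lemma lattice_point_weight_le:
  fixes z :: complex and m n :: int
  assumes y: "Im z > 0" and nz: "(m, n) \<noteq> (0, 0)"
  shows "(1 + \<bar>real_of_int m\<bar>) * (1 + \<bar>real_of_int n\<bar>) \<le> 5 * lattice_const z * norm (of_int m * z + of_int n) ^ 2"
proof -
  have "\<bar>real_of_int m\<bar> + \<bar>real_of_int n\<bar> \<ge> 1" using nz by auto
  then have "(1 + \<bar>real_of_int m\<bar>) * (1 + \<bar>real_of_int n\<bar>) \<le> 5 * (\<bar>real_of_int m\<bar> ^ 2 + \<bar>real_of_int n\<bar> ^ 2)"
    by (intro one_plus_mult_one_plus_le) auto
  also have "\<dots> = 5 * (real_of_int m ^ 2 + real_of_int n ^ 2)" by simp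
  also have "\<dots> \<le> 5 * (lattice_const z * norm (of_int m * z + of_int n) ^ 2)"
    using sum_squares_le_norm_lattice_point[OF y, of m n] by simp
  finally show ?thesis by simp
qed

definition lattice_weight :: "int \<Rightarrow> real" where
  "lattice_weight k = 1 / ((1 + \<bar>real_of_int k\<bar>) * sqrt (1 + \<bar>real_of_int k\<bar>))"

lemma lattice_weight_pos: "lattice_weight k > 0"
  unfolding lattice_weight_def by (auto intro!: divide_pos_pos mult_pos_pos)

lemma lattice_weight_sq: "lattice_weight k ^ 2 = 1 / (1 + \<bar>real_of_int k\<bar>) ^ 3"
proof -
  have p: "1 + \<bar>real_of_int k\<bar> > 0" by simp
  have "sqrt (1 + \<bar>real_of_int k\<bar>) ^ 2 = 1 + \<bar>real_of_int k\<bar>" using p by simp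
  then show ?thesis unfolding lattice_weight_def by (simp add: power2_eq_square power3_eq_cube field_simps)
qed

lemma lattice_point_weight_le_succ:
  fixes z :: complex and m n :: int
  assumes y: "Im z > 0" and nz: "of_int m * z + of_int n + 1 \<noteq> 0"
  shows "(1 + \<bar>real_of_int m\<bar>) * (1 + \<bar>real_of_int n\<bar>) \<le> 10 * lattice_const z * norm (of_int m * z + of_int n + 1) ^ 2"
proof -
  have "(m, n + 1) \<noteq> (0, 0)"
  proof
    assume "(m, n + 1) = (0, 0)"
    then have "m = 0" "n = -1" by auto
    then show False using nz by simp
  qed
  from lattice_point_weight_le[OF y this]
  have "(1 + \<bar>real_of_int m\<bar>) * (1 + \<bar>real_of_int (n + 1)\<bar>) \<le> 5 * lattice_const z * norm (of_int m * z + of_int n + 1) ^ 2"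
    by (simp add: add.assoc)
  moreover have "1 + \<bar>real_of_int n\<bar> \<le> 2 * (1 + \<bar>real_of_int (n + 1)\<bar>)" by (simp add: abs_if)
  then have "(1 + \<bar>real_of_int m\<bar>) * (1 + \<bar>real_of_int n\<bar>) \<le> (1 + \<bar>real_of_int m\<bar>) * (2 * (1 + \<bar>real_of_int (n + 1)\<bar>))"
    by (rule mult_left_mono) simp
  ultimately show ?thesis by linarith
qed

lemma lattice_weight_mult_sq:
  "(lattice_weight m * lattice_weight n) ^ 2 = 1 / ((1 + \<bar>real_of_int m\<bar>) * (1 + \<bar>real_of_int n\<bar>)) ^ 3"
proof -
  have "(lattice_weight m * lattice_weight n) ^ 2 = lattice_weight m ^ 2 * lattice_weight n ^ 2"
    by (rule power_mult_distrib)
  also have "\<dots> = 1 / (1 + \<bar>real_of_int m\<bar>) ^ 3 * (1 / (1 + \<bar>real_of_int n\<bar>) ^ 3)"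
    by (simp only: lattice_weight_sq)
  finally show ?thesis by (simp add: power_mult_distrib)
qed

lemma norm_eisenstein_term_le:
  fixes z :: complex and m n :: int
  assumes y: "Im z > 0"
  shows "norm (1 / ((of_int m * z + of_int n) ^ 2 * (of_int m * z + of_int n + 1)))
         \<le> sqrt (250 * lattice_const z ^ 3) * (lattice_weight m * lattice_weight n)"
proof (cases "of_int m * z + of_int n = 0 \<or> of_int m * z + of_int n + 1 = 0")
  case True
  have "0 \<le> sqrt (250 * lattice_const z ^ 3)" using lattice_const_ge_2[OF y] by simp
  then show ?thesis using True lattice_weight_pos[of m] lattice_weight_pos[of n] by auto
next
  case False
  define W where "W = of_int m * z + of_int n"
  define P where "P = (1 + \<bar>real_of_int m\<bar>) * (1 + \<bar>real_of_int n\<bar>)"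
  define K where "K = lattice_const z"
  have K: "K \<ge> 2" unfolding K_def by (rule lattice_const_ge_2[OF y])
  have W: "norm W > 0" "norm (W + 1) > 0" using False by (auto simp: W_def)
  have P0: "P > 0" unfolding P_def by (auto intro!: mult_pos_pos)
  have "(m, n) \<noteq> (0, 0)" using False by auto
  then have P1: "P \<le> 5 * K * norm W ^ 2"
    unfolding P_def W_def K_def by (rule lattice_point_weight_le[OF y])
  have P2: "P \<le> 10 * K * norm (W + 1) ^ 2"
    unfolding P_def W_def K_def using False by (intro lattice_point_weight_le_succ[OF y]) auto
  have "P * P * P \<le> (5 * K * norm W ^ 2) * (5 * K * norm W ^ 2) * (10 * K * norm (W + 1) ^ 2)"
    using P0 P1 P2 K by (intro mult_mono) auto
  also have "\<dots> = 250 * K ^ 3 * (norm W ^ 2 * norm W ^ 2 * norm (W + 1) ^ 2)"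
    by (simp add: power2_eq_square power3_eq_cube algebra_simps)
  finally have P3: "P ^ 3 \<le> 250 * K ^ 3 * (norm W ^ 2 * norm W ^ 2 * norm (W + 1) ^ 2)"
    by (simp add: power3_eq_cube)
  have D: "norm W ^ 2 * norm W ^ 2 * norm (W + 1) ^ 2 > 0" using W by simp
  have bound: "1 / (norm W ^ 2 * norm W ^ 2 * norm (W + 1) ^ 2) \<le> 250 * K ^ 3 / P ^ 3"
    using P3 D P0 by (simp add: field_simps)
  have nrm: "norm (1 / (W ^ 2 * (W + 1))) ^ 2 = 1 / (norm W ^ 2 * norm W ^ 2 * norm (W + 1) ^ 2)"
    by (simp add: norm_divide norm_mult norm_power power_mult_distrib power2_eq_square)
  have sq: "(sqrt (250 * K ^ 3) * (lattice_weight m * lattice_weight n)) ^ 2 = 250 * K ^ 3 / P ^ 3"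
  proof -
    have "(sqrt (250 * K ^ 3) * (lattice_weight m * lattice_weight n)) ^ 2
        = sqrt (250 * K ^ 3) ^ 2 * (lattice_weight m * lattice_weight n) ^ 2"
      by (rule power_mult_distrib)
    also have "\<dots> = 250 * K ^ 3 / P ^ 3" unfolding lattice_weight_mult_sq P_def using K by simp
    finally show ?thesis .
  qed
  have "norm (1 / (W ^ 2 * (W + 1))) ^ 2 \<le> (sqrt (250 * K ^ 3) * (lattice_weight m * lattice_weight n)) ^ 2"
    unfolding nrm sq by (rule bound)
  moreover have "0 \<le> sqrt (250 * K ^ 3) * (lattice_weight m * lattice_weight n)"
    using K lattice_weight_pos[of m] lattice_weight_pos[of n] by simp
  ultimately have "norm (1 / (W ^ 2 * (W + 1))) \<le> sqrt (250 * K ^ 3) * (lattice_weight m * lattice_weight n)"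
    by (rule power2_le_imp_le)
  then show ?thesis by (simp add: W_def K_def)
qed

lemma inverse_mult_sqrt_eq_powr:
  fixes x :: real
  assumes "x > 0"
  shows "1 / (x * sqrt x) = x powr (- 3 / 2)"
proof -
  have e: "x powr (1 + 1 / 2) = x powr 1 * x powr (1 / 2)"
    by (rule powr_add)
  have "x powr (3 / 2) = x powr 1 * x powr (1 / 2)"
    using e by simp
  also have "\<dots> = x * sqrt x"
    using assms by (simp add: powr_half_sqrt)
  finally show ?thesis
    using assms by (simp add: powr_minus_divide)
qed

lemma summable_inverse_three_halves_shift:
  "summable (\<lambda>k::nat. 1 / ((real k + c) * sqrt (real k + c)))" if "c \<ge> 1" for c :: real
proof (rule summable_comparison_test_ev)
  show "summable (\<lambda>k. real k powr (- 3 / 2))" by (simp add: summable_real_powr_iff)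
  show "eventually (\<lambda>k. norm (1 / ((real k + c) * sqrt (real k + c))) \<le> real k powr (- 3 / 2)) sequentially"
    using eventually_gt_at_top[of "0::nat"]
  proof eventually_elim
    case (elim k)
    have kp: "real k > 0" using elim by simp
    have "1 / ((real k + c) * sqrt (real k + c)) \<le> 1 / (real k * sqrt (real k))"
      using kp that by (intro divide_left_mono mult_mono real_sqrt_le_mono mult_pos_pos) auto
    also have "\<dots> = real k powr (- 3 / 2)" using inverse_mult_sqrt_eq_powr[OF kp] .
    finally show ?case using kp that by simp
  qed
qed

lemma lattice_weight_summable: "lattice_weight summable_on (UNIV :: int set)"
proof -
  have s1: "summable (\<lambda>k::nat. lattice_weight (int k))"
    using summable_inverse_three_halves_shift[of 1] by (simp add: lattice_weight_def add.commute)
  have s2: "summable (\<lambda>k::nat. lattice_weight (- int k - 1))"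
  proof -
    have "lattice_weight (- int k - 1) = 1 / ((real k + 2) * sqrt (real k + 2))" for k
      by (simp add: lattice_weight_def add.commute)
    then show ?thesis using summable_inverse_three_halves_shift[of 2] by simp
  qed
  have p1: "((\<lambda>k::nat. lattice_weight (int k)) has_sum (suminf (\<lambda>k::nat. lattice_weight (int k)))) UNIV"
    using s1 lattice_weight_pos by (intro sums_nonneg_imp_has_sum summable_sums) (auto intro: less_imp_le)
  have p2: "((\<lambda>k::nat. lattice_weight (- int k - 1)) has_sum (suminf (\<lambda>k::nat. lattice_weight (- int k - 1)))) UNIV"
    using s2 lattice_weight_pos by (intro sums_nonneg_imp_has_sum summable_sums) (auto intro: less_imp_le)
  show ?thesis using has_sum_int_from_nat_halves[OF p1 p2] by (auto simp: summable_on_def)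
qed

lemma eisenstein_term_summable:
  fixes z :: complex
  assumes y: "Im z > 0"
  shows "eisenstein_term z summable_on UNIV"
proof -
  define C where "C = sqrt (250 * lattice_const z ^ 3)"
  have C0: "C \<ge> 0" using lattice_const_ge_2[OF y] by (simp add: C_def)
  define g where "g = (\<lambda>(m::int, n::int). C * (lattice_weight m * lattice_weight n))"
  define S where "S = infsum lattice_weight UNIV"
  have ga: "(\<lambda>x. norm (g x)) summable_on UNIV \<times> UNIV"
  proof (subst Infinite_Sum.abs_summable_on_Sigma_iff, intro conjI ballI)
    fix m :: int
    show "(\<lambda>n. norm (g (m, n))) summable_on UNIV"
      unfolding g_def using lattice_weight_summable lattice_weight_pos C0
      by (auto intro!: summable_on_cmult_right simp: abs_of_pos abs_mult less_imp_le)
  next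
    have "(\<Sum>\<^sub>\<infinity>n. norm (g (m, n))) = C * lattice_weight m * S" for m
    proof -
      have "(\<Sum>\<^sub>\<infinity>n. norm (g (m, n))) = (\<Sum>\<^sub>\<infinity>n. (C * lattice_weight m) * lattice_weight n)"
        unfolding g_def using lattice_weight_pos C0 by (intro infsum_cong) (auto simp: abs_mult abs_of_pos less_imp_le)
      also have "\<dots> = (C * lattice_weight m) * S" unfolding S_def
        by (rule infsum_cmult_right') 
      finally show ?thesis .
    qed
    then show "(\<lambda>m. norm (\<Sum>\<^sub>\<infinity>n. norm (g (m, n)))) summable_on UNIV"
      using lattice_weight_summable lattice_weight_pos C0
      by (simp add: mult.commute mult.left_commute) (auto intro!: summable_on_cmult_right simp: abs_mult abs_of_pos less_imp_le)
  qed
  have "(\<lambda>x. norm ((\<lambda>(m, n). 1 / ((of_int m * z + of_int n) ^ 2 * (of_int m * z + of_int n + 1))) x)) summable_on (UNIV \<times> UNIV)"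
  proof (rule Infinite_Sum.abs_summable_on_comparison_test[OF ga])
    fix x :: "int \<times> int"
    obtain m n where x: "x = (m, n)" by (cases x)
    show "norm ((\<lambda>(m, n). 1 / ((of_int m * z + of_int n) ^ 2 * (of_int m * z + of_int n + 1))) x) \<le> norm (g x)"
      using norm_eisenstein_term_le[OF y, of m n] lattice_weight_pos[of m] lattice_weight_pos[of n] C0
      by (simp add: x g_def C_def abs_mult abs_of_pos less_imp_le)
  qed
  then show ?thesis
    unfolding eisenstein_term_def UNIV_Times_UNIV[symmetric] by (rule abs_summable_summable)
qed

lemma has_sum_inverse_square_int_real: "((\<lambda>n::int. 1 / (real_of_int n) ^ 2) has_sum (pi ^ 2 / 3)) UNIV"
proof -
  have s: "(\<lambda>k::nat. 1 / (real (Suc k)) ^ 2) sums (pi ^ 2 / 6)"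
    using inverse_squares_sums by simp
  have s0: "(\<lambda>k::nat. 1 / (real k) ^ 2) sums (pi ^ 2 / 6)"
    using sums_Suc_iff[of "\<lambda>k::nat. 1 / (real k) ^ 2" "pi ^ 2 / 6"] s by simp
  have A: "((\<lambda>k::nat. 1 / (real_of_int (int k)) ^ 2) has_sum (pi ^ 2 / 6)) UNIV"
    using sums_nonneg_imp_has_sum[OF s0] by simp
  have B: "((\<lambda>k::nat. 1 / (real_of_int (- int k - 1)) ^ 2) has_sum (pi ^ 2 / 6)) UNIV"
  proof -
    have "1 / (real_of_int (- int k - 1)) ^ 2 = 1 / (real (Suc k)) ^ 2" for k
      by (simp add: power2_eq_square algebra_simps)
    then show ?thesis using sums_nonneg_imp_has_sum[OF s] by simp
  qed
  show ?thesis using has_sum_int_from_nat_halves[OF A B] by simp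
qed

lemma has_sum_inverse_int_times_succ_real: "((\<lambda>n::int. 1 / (real_of_int n * (real_of_int n + 1))) has_sum 2) UNIV"
proof -
  have t: "(\<lambda>k::nat. 1 / real (Suc k) - 1 / real (Suc (Suc k))) sums (1 / real (Suc 0) - 0)"
    by (rule telescope_sums'[of "\<lambda>k. 1 / real (Suc k)"]) (rule LIMSEQ_inverse_real_of_nat[unfolded inverse_eq_divide])
  have e: "1 / real (Suc k) - 1 / real (Suc (Suc k)) = 1 / (real (Suc k) * (real (Suc k) + 1))" for k
    by (simp add: field_simps)
  have s: "(\<lambda>k::nat. 1 / (real (Suc k) * (real (Suc k) + 1))) sums 1"
    using t unfolding e by simp
  have s0: "(\<lambda>k::nat. 1 / (real k * (real k + 1))) sums 1"
    using sums_Suc_iff[of "\<lambda>k::nat. 1 / (real k * (real k + 1))" 1] s by simp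
  have A: "((\<lambda>k::nat. 1 / (real_of_int (int k) * (real_of_int (int k) + 1))) has_sum 1) UNIV"
    using sums_nonneg_imp_has_sum[OF s0] by simp
  have B: "((\<lambda>k::nat. 1 / (real_of_int (- int k - 1) * (real_of_int (- int k - 1) + 1))) has_sum 1) UNIV"
  proof -
    have "1 / (real_of_int (- int k - 1) * (real_of_int (- int k - 1) + 1)) = 1 / (real k * (real k + 1))" for k
      by (simp add: algebra_simps)
    then show ?thesis using sums_nonneg_imp_has_sum[OF s0] by simp
  qed
  show ?thesis using has_sum_int_from_nat_halves[OF A B] by simp
qed

lemma has_sum_inverse_square_int: "((\<lambda>n::int. 1 / (of_int n) ^ 2 :: complex) has_sum (of_real pi ^ 2 / 3)) UNIV"
proof -
  have "((\<lambda>n::int. of_real (1 / (real_of_int n) ^ 2) :: complex) has_sum of_real (pi ^ 2 / 3)) UNIV"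
    using has_sum_inverse_square_int_real by (subst has_sum_of_real_iff)
  then show ?thesis by simp
qed

lemma has_sum_inverse_int_times_succ: "((\<lambda>n::int. 1 / (of_int n * (of_int n + 1)) :: complex) has_sum 2) UNIV"
proof -
  have "((\<lambda>n::int. of_real (1 / (real_of_int n * (real_of_int n + 1))) :: complex) has_sum of_real 2) UNIV"
    using has_sum_inverse_int_times_succ_real by (subst has_sum_of_real_iff)
  then show ?thesis by simp
qed

lemma inverse_square_times_succ_split:
  fixes W :: complex
  assumes "W \<noteq> 0" "W + 1 \<noteq> 0"
  shows "1 / (W ^ 2 * (W + 1)) = 1 / W ^ 2 - 1 / (W * (W + 1))"
    and "1 / (W * (W + 1)) = 1 / W - 1 / (W + 1)"
proof -
  have d1: "W ^ 2 * (W + 1) \<noteq> 0" "W * (W + 1) \<noteq> 0" using assms by auto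
  have e1: "1 / W ^ 2 = (W + 1) / (W ^ 2 * (W + 1))" using assms by simp
  have e2: "1 / (W * (W + 1)) = W / (W ^ 2 * (W + 1))" using assms by (simp add: power2_eq_square)
  have "1 / W ^ 2 - 1 / (W * (W + 1)) = ((W + 1) - W) / (W ^ 2 * (W + 1))"
    unfolding e1 e2 by (rule diff_divide_distrib[symmetric])
  then show "1 / (W ^ 2 * (W + 1)) = 1 / W ^ 2 - 1 / (W * (W + 1))" by simp
  have e3: "1 / W = (W + 1) / (W * (W + 1))" using assms by simp
  have e4: "1 / (W + 1) = W / (W * (W + 1))" using assms by simp
  have "1 / W - 1 / (W + 1) = ((W + 1) - W) / (W * (W + 1))"
    unfolding e3 e4 by (rule diff_divide_distrib[symmetric])
  then show "1 / (W * (W + 1)) = 1 / W - 1 / (W + 1)" by simp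
qed

lemma has_sum_eisenstein_row:
  fixes \<tau> :: complex and m :: int
  assumes y: "Im \<tau> > 0" and m: "m \<noteq> 0"
  shows "((\<lambda>n. eisenstein_term \<tau> (m, n)) has_sum pi_csc_sq (of_int m * \<tau>)) UNIV"
proof -
  define w where "w = of_int m * \<tau>"
  have Imw: "Im w \<noteq> 0" using y m by (simp add: w_def)
  have Imw1: "Im (w + 1) \<noteq> 0" using Imw by simp
  have e: "eisenstein_term \<tau> (m, n) = 1 / (w + of_int n) ^ 2 - (1 / (w + of_int n) - 1 / ((w + 1) + of_int n))" for n
  proof -
    have a: "w + of_int n \<noteq> 0"
    proof
      assume "w + of_int n = 0"
      then have "Im (w + of_int n) = 0" by simp
      then show False using Imw by simp
    qed
    have b: "w + of_int n + 1 \<noteq> 0"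
    proof
      assume "w + of_int n + 1 = 0"
      then have "Im (w + of_int n + 1) = 0" by simp
      then show False using Imw by simp
    qed
    have "eisenstein_term \<tau> (m, n) = 1 / ((w + of_int n) ^ 2 * (w + of_int n + 1))"
      by (simp add: eisenstein_term_def w_def)
    also have "\<dots> = 1 / (w + of_int n) ^ 2 - (1 / (w + of_int n) - 1 / (w + of_int n + 1))"
      using inverse_square_times_succ_split[OF a b] by simp
    also have "w + of_int n + 1 = (w + 1) + of_int n" by simp
    finally show ?thesis .
  qed
  have s1: "((\<lambda>n::int. 1 / (w + of_int n) ^ 2) has_sum pi_csc_sq w) UNIV"
    by (rule has_sum_inverse_square_shift[OF not_Ints_if_Im_nonzero[OF Imw]])
  have s2: "((\<lambda>n::int. 1 / (w + of_int n) - 1 / ((w + 1) + of_int n)) has_sum (pi_cot w - pi_cot (w + 1))) UNIV"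
    by (rule has_sum_inverse_diff_shift[OF not_Ints_if_Im_nonzero[OF Imw] not_Ints_if_Im_nonzero[OF Imw1]])
  have "((\<lambda>n. eisenstein_term \<tau> (m, n)) has_sum (pi_csc_sq w - (pi_cot w - pi_cot (w + 1)))) UNIV"
    unfolding e by (rule has_sum_diff[OF s1 s2])
  then show ?thesis by (simp add: pi_cot_plus_1 w_def)
qed

lemma has_sum_eisenstein_row_0:
  fixes \<tau> :: complex
  shows "((\<lambda>n. eisenstein_term \<tau> (0, n)) has_sum (of_real pi ^ 2 / 3 - 2 - 1)) UNIV"
proof -
  have ind: "((\<lambda>n::int. if n = -1 then 1 else 0 :: complex) has_sum 1) UNIV"
  proof -
    have "((\<lambda>n::int. if n = -1 then 1 else 0 :: complex) has_sum 1) {-1}" by (rule has_sum_finiteI) auto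
    then show ?thesis by (subst (asm) has_sum_cong_neutral[of UNIV "{-1}"]) auto
  qed
  have e: "eisenstein_term \<tau> (0, n) = 1 / (of_int n) ^ 2 - 1 / (of_int n * (of_int n + 1)) - (if n = -1 then 1 else 0)" for n
  proof (cases "n = 0 \<or> n = -1")
    case True then show ?thesis by (auto simp: eisenstein_term_def)
  next
    case False
    then have a: "(of_int n :: complex) \<noteq> 0" "(of_int n + 1 :: complex) \<noteq> 0"
      by (auto simp: of_int_eq_iff[symmetric] simp del: of_int_eq_iff)
         (metis add.inverse_neutral add_eq_0_iff2 of_int_1 of_int_eq_iff of_int_minus)
    have "eisenstein_term \<tau> (0, n) = 1 / ((of_int n) ^ 2 * (of_int n + 1))"
      by (simp add: eisenstein_term_def)
    also have "\<dots> = 1 / (of_int n) ^ 2 - 1 / (of_int n * (of_int n + 1))"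
      using inverse_square_times_succ_split(1)[OF a] by simp
    finally show ?thesis using False by simp
  qed
  show ?thesis unfolding e by (intro has_sum_diff has_sum_inverse_square_int has_sum_inverse_int_times_succ ind)
qed

text \<open>\<open>G\<^sub>2\<close> summed row by row: \<open>\<Sum>\<^sub>n' (m \<tau> + n)\<^sup>-\<^sup>2\<close> is \<open>\<pi>\<^sup>2 / 3\<close> for \<open>m = 0\<close> and
  \<open>pi_csc_sq (m \<tau>)\<close> otherwise.\<close>

definition G2 :: "complex \<Rightarrow> complex" where
  "G2 \<tau> = of_real pi ^ 2 / 3 + (\<Sum>\<^sub>\<infinity>m\<in>UNIV - {0}. pi_csc_sq (of_int m * \<tau>))"

lemma eisenstein_sum_by_rows:
  fixes \<tau> :: complex
  assumes y: "Im \<tau> > 0"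
  shows "((\<lambda>m::int. pi_csc_sq (of_int m * \<tau>)) has_sum (G2 \<tau> - of_real pi ^ 2 / 3)) (UNIV - {0})"
    and "infsum (eisenstein_term \<tau>) UNIV = G2 \<tau> - 3"
proof -
  have sm: "eisenstein_term \<tau> summable_on (UNIV \<times> UNIV)"
    using eisenstein_term_summable[OF y] by simp
  define SA where "SA = infsum (eisenstein_term \<tau>) UNIV"
  have hs: "(eisenstein_term \<tau> has_sum SA) (Sigma UNIV (\<lambda>_. UNIV))"
    using sm by (simp add: SA_def)
  define rowv where "rowv m = (if m = 0 then of_real pi ^ 2 / 3 - 3 else pi_csc_sq (of_int m * \<tau>))" for m :: int
  have "(rowv has_sum SA) UNIV"
  proof (rule has_sum_SigmaD[OF hs])
    fix m :: int
    show "((\<lambda>n. eisenstein_term \<tau> (m, n)) has_sum rowv m) UNIV"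
      using has_sum_eisenstein_row[OF y, of m] has_sum_eisenstein_row_0[of \<tau>] by (cases "m = 0") (auto simp: rowv_def)
  qed
  then have r: "(rowv has_sum (SA - rowv 0)) (UNIV - {0})" by (rule has_sum_remove_point) simp
  have r2: "((\<lambda>m::int. pi_csc_sq (of_int m * \<tau>)) has_sum (SA - (of_real pi ^ 2 / 3 - 3))) (UNIV - {0})"
    using r by (subst has_sum_cong[where g = rowv]) (auto simp: rowv_def)
  then have "G2 \<tau> = SA + 3" unfolding G2_def by (simp add: infsumI)
  then show "((\<lambda>m::int. pi_csc_sq (of_int m * \<tau>)) has_sum (G2 \<tau> - of_real pi ^ 2 / 3)) (UNIV - {0})"
    and "infsum (eisenstein_term \<tau>) UNIV = G2 \<tau> - 3"
    using r2 by (simp_all add: SA_def algebra_simps)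
qed

lemma Im_of_int_divide_nonzero:
  fixes z :: complex and n :: int
  assumes y: "Im z > 0" and n: "n \<noteq> 0"
  shows "Im (of_int n / z) \<noteq> 0"
proof -
  have z0: "z \<noteq> 0" using y by auto
  have "Im (of_int n / z) = - real_of_int n * Im z / (cmod z)^2"
    by (simp add: Im_divide cmod_power2)
  then show ?thesis using y n z0 by simp
qed

lemma lattice_point_nonzero:
  fixes z :: complex and m n :: int
  assumes y: "Im z > 0" and n: "n \<noteq> 0"
  shows "of_int m * z + of_int n \<noteq> 0"
proof (cases "m = 0")
  case True then show ?thesis using n by simp
next
  case False
  show ?thesis
  proof
    assume "of_int m * z + of_int n = 0"
    then have "Im (of_int m * z + of_int n) = 0" by simp
    then show False using False y by simp
  qed
qed

lemma scale_inverse_divide: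
  fixes z W V :: complex
  assumes "z \<noteq> 0"
  shows "1 / z * (1 / (W / z) - 1 / (V / z)) = 1 / W - 1 / V"
    and "1 / z ^ 2 * (1 / (W / z) ^ 2) = 1 / W ^ 2"
proof -
  have "1 / z * (1 / (W / z) - 1 / (V / z)) = 1 / z * (z / W - z / V)" by simp
  also have "\<dots> = 1 / W - 1 / V" using assms by (simp add: right_diff_distrib)
  finally show "1 / z * (1 / (W / z) - 1 / (V / z)) = 1 / W - 1 / V" .
  show "1 / z ^ 2 * (1 / (W / z) ^ 2) = 1 / W ^ 2" using assms by (simp add: power_divide)
qed

lemma has_sum_eisenstein_column:
  fixes z :: complex and n :: int
  assumes y: "Im z > 0" and n0: "n \<noteq> 0" and n1: "n \<noteq> -1"
  shows "((\<lambda>m. eisenstein_term z (m, n)) has_sum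
     (1 / z ^ 2 * pi_csc_sq (of_int n / z) - 1 / z * (pi_cot (of_int n / z) - pi_cot (of_int (n + 1) / z)))) UNIV"
proof -
  have z0: "z \<noteq> 0" using y by auto
  have n1': "n + 1 \<noteq> 0" using n1 by simp
  have e: "eisenstein_term z (m, n) = 1 / z ^ 2 * (1 / (of_int n / z + of_int m) ^ 2)
      - 1 / z * (1 / (of_int n / z + of_int m) - 1 / (of_int (n + 1) / z + of_int m))" for m
  proof -
    define W where "W = of_int m * z + of_int n"
    have a: "W \<noteq> 0" unfolding W_def by (rule lattice_point_nonzero[OF y n0])
    have b: "W + 1 \<noteq> 0" using lattice_point_nonzero[OF y n1', of m] by (simp add: W_def add.assoc)
    have W1: "of_int n / z + of_int m = W / z" using z0 by (simp add: W_def field_simps)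
    have W2: "of_int (n + 1) / z + of_int m = (W + 1) / z" using z0 by (simp add: W_def field_simps)
    have "eisenstein_term z (m, n) = 1 / (W ^ 2 * (W + 1))" by (simp add: eisenstein_term_def W_def)
    also have "\<dots> = 1 / W ^ 2 - (1 / W - 1 / (W + 1))"
      using inverse_square_times_succ_split[OF a b] by simp
    also have "\<dots> = 1 / z ^ 2 * (1 / (W / z) ^ 2) - 1 / z * (1 / (W / z) - 1 / ((W + 1) / z))"
      by (simp only: scale_inverse_divide[OF z0])
    finally show ?thesis by (simp only: W1 W2)
  qed
  have s1: "((\<lambda>m::int. 1 / (of_int n / z + of_int m) ^ 2) has_sum pi_csc_sq (of_int n / z)) UNIV"
    by (rule has_sum_inverse_square_shift[OF not_Ints_if_Im_nonzero[OF Im_of_int_divide_nonzero[OF y n0]]])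
  have s2: "((\<lambda>m::int. 1 / (of_int n / z + of_int m) - 1 / (of_int (n + 1) / z + of_int m)) has_sum
       (pi_cot (of_int n / z) - pi_cot (of_int (n + 1) / z))) UNIV"
        by (rule has_sum_inverse_diff_shift[OF not_Ints_if_Im_nonzero[OF Im_of_int_divide_nonzero[OF y n0]] not_Ints_if_Im_nonzero[OF Im_of_int_divide_nonzero[OF y n1']]])
  show ?thesis unfolding e
    by (intro has_sum_diff has_sum_cmult_right s1 s2)
qed

lemma has_sum_eisenstein_columns_0_minus_1:
  fixes z :: complex
  assumes y: "Im z > 0"
  shows "((\<lambda>m. eisenstein_term z (m, 0) + eisenstein_term z (m, -1)) has_sum
     (1 / z ^ 2 * (of_real pi ^ 2 / 3) + 1 / z ^ 2 * pi_csc_sq (- 1 / z) - 1 / z * (pi_cot (- 1 / z) - pi_cot (1 / z)) - 3)) UNIV"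
proof -
  have z0: "z \<noteq> 0" using y by auto
  have ind: "((\<lambda>m::int. if m = 0 then 3 else 0 :: complex) has_sum 3) UNIV"
  proof -
    have "((\<lambda>m::int. if m = 0 then 3 else 0 :: complex) has_sum 3) {0}" by (rule has_sum_finiteI) auto
    then show ?thesis by (subst (asm) has_sum_cong_neutral[of UNIV "{0}"]) auto
  qed
  have e: "eisenstein_term z (m, 0) + eisenstein_term z (m, -1) = 1 / z ^ 2 * (1 / (of_int m) ^ 2) + 1 / z ^ 2 * (1 / (- 1 / z + of_int m) ^ 2)
      - 1 / z * (1 / (- 1 / z + of_int m) - 1 / (1 / z + of_int m)) - (if m = 0 then 3 else 0)" for m
  proof (cases "m = 0")
    case True
    then show ?thesis using z0 by (simp add: eisenstein_term_def power2_eq_square)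
  next
    case False
    define W where "W = of_int m * z"
    have a: "W \<noteq> 0" using False z0 by (simp add: W_def)
    have b: "W + 1 \<noteq> 0" using lattice_point_nonzero[OF y, of 1 m] by (simp add: W_def add.commute)
    have c: "W - 1 \<noteq> 0" using lattice_point_nonzero[OF y, of "-1" m] by (simp add: W_def)
    have c1: "(W - 1) + 1 \<noteq> 0" using a by simp
    have E1: "- 1 / z + of_int m = (W - 1) / z" using z0 by (simp add: W_def field_simps)
    have E2: "1 / z + of_int m = (W + 1) / z" using z0 by (simp add: W_def field_simps)
    have A0: "eisenstein_term z (m, 0) = 1 / W ^ 2 - (1 / W - 1 / (W + 1))"
      using inverse_square_times_succ_split[OF a b] by (simp add: eisenstein_term_def W_def)
    have A1: "eisenstein_term z (m, -1) = 1 / (W - 1) ^ 2 - (1 / (W - 1) - 1 / W)"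
      using inverse_square_times_succ_split[OF c c1] by (simp add: eisenstein_term_def W_def)
    have "eisenstein_term z (m, 0) + eisenstein_term z (m, -1) = 1 / W ^ 2 + 1 / (W - 1) ^ 2 - (1 / (W - 1) - 1 / (W + 1))"
      unfolding A0 A1 by simp
    also have "\<dots> = 1 / z ^ 2 * (1 / (of_int m) ^ 2) + 1 / z ^ 2 * (1 / ((W - 1) / z) ^ 2)
      - 1 / z * (1 / ((W - 1) / z) - 1 / ((W + 1) / z))"
    proof -
      have "1 / W ^ 2 = 1 / z ^ 2 * (1 / (of_int m) ^ 2)" by (simp add: W_def power_mult_distrib)
      then show ?thesis by (simp only: scale_inverse_divide[OF z0])
    qed
    finally show ?thesis using False by (simp only: E1 E2) simp
  qed
  have s0: "((\<lambda>m::int. 1 / (of_int m) ^ 2 :: complex) has_sum (of_real pi ^ 2 / 3)) UNIV" by (rule has_sum_inverse_square_int)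
  have s1: "((\<lambda>m::int. 1 / (- 1 / z + of_int m) ^ 2) has_sum pi_csc_sq (- 1 / z)) UNIV"
    by (rule has_sum_inverse_square_shift[OF not_Ints_if_Im_nonzero]) (use y Im_of_int_divide_nonzero[OF y, of "-1"] in simp)
  have s2: "((\<lambda>m::int. 1 / (- 1 / z + of_int m) - 1 / (1 / z + of_int m)) has_sum
       (pi_cot (- 1 / z) - pi_cot (1 / z))) UNIV"
        by (rule has_sum_inverse_diff_shift[OF not_Ints_if_Im_nonzero not_Ints_if_Im_nonzero]) (use Im_of_int_divide_nonzero[OF y, of "-1"] Im_of_int_divide_nonzero[OF y, of 1] in simp_all)
  show ?thesis unfolding e
    by (intro has_sum_diff has_sum_add has_sum_cmult_right s0 s1 s2 ind)
qed

lemma cot_eq_exp: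
  fixes x :: complex
  assumes s: "sin x \<noteq> 0"
  shows "cos x / sin x = \<i> * (1 + exp (- 2 * \<i> * x)) / (1 - exp (- 2 * \<i> * x))"
proof -
  define a where "a = exp (\<i> * x)"
  define b where "b = exp (- (\<i> * x))"
  have ab: "a * b = 1" by (simp add: a_def b_def exp_minus_inverse)
  have b2: "exp (- 2 * \<i> * x) = b * b" by (simp add: b_def exp_add[symmetric] mult.assoc)
  have c: "cos x = (a + b) / 2" by (simp add: cos_exp_eq a_def b_def)
  have sn: "sin x = (a - b) / (2 * \<i>)" by (simp add: sin_exp_eq a_def b_def)
  have amb: "a - b \<noteq> 0" using s sn by auto
  have bnz: "b \<noteq> 0" by (simp add: b_def)
  have "cos x / sin x = \<i> * (a + b) / (a - b)"
    using amb by (simp add: c sn field_simps)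
  also have "\<dots> = \<i> * (a * b + b * b) / (a * b - b * b)"
    using bnz amb by (simp add: field_simps)
  also have "\<dots> = \<i> * (1 + exp (- 2 * \<i> * x)) / (1 - exp (- 2 * \<i> * x))"
    by (simp only: ab b2)
  finally show ?thesis .
qed

lemma pi_cot_tendsto:
  fixes z :: complex
  assumes y: "Im z > 0"
  shows "(\<lambda>k::nat. pi_cot (of_nat k / z)) \<longlonglongrightarrow> of_real pi * \<i>"
proof -
  have z0: "z \<noteq> 0" using y by auto
  define q where "q = exp (- 2 * \<i> * (of_real pi / z))"
  have nq: "norm q < 1"
  proof -
    have "Re (- 2 * \<i> * (of_real pi / z)) = - 2 * pi * Im z / (cmod z)^2"
      by (simp add: Re_divide Im_divide cmod_power2 field_simps)
    also have "\<dots> < 0" using y z0 by (simp add: divide_neg_pos)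
    finally show ?thesis by (simp add: q_def)
  qed
  have qk: "(\<lambda>k. q ^ k) \<longlonglongrightarrow> 0" by (rule LIMSEQ_power_zero[OF nq])
  have lim: "(\<lambda>k. of_real pi * (\<i> * (1 + q ^ k) / (1 - q ^ k))) \<longlonglongrightarrow> of_real pi * (\<i> * (1 + 0) / (1 - 0))"
    by (intro tendsto_intros qk) simp
  have ev: "eventually (\<lambda>k. of_real pi * (\<i> * (1 + q ^ k) / (1 - q ^ k)) = pi_cot (of_nat k / z)) sequentially"
    using eventually_gt_at_top[of "0::nat"]
  proof eventually_elim
    case (elim k)
    have Ik: "Im (of_nat k / z) \<noteq> 0" using Im_of_int_divide_nonzero[OF y, of "int k"] elim by simp
    have s: "sin (of_real pi * (of_nat k / z)) \<noteq> 0"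
      using not_Ints_if_Im_nonzero[OF Ik] sin_pi_times_eq_0_iff by blast
    have e: "exp (- 2 * \<i> * (of_real pi * (of_nat k / z))) = q ^ k"
      unfolding q_def by (subst exp_of_nat_mult[symmetric]) (simp add: algebra_simps)
    have "pi_cot (of_nat k / z) = of_real pi * (cos (of_real pi * (of_nat k / z)) / sin (of_real pi * (of_nat k / z)))"
      unfolding pi_cot_def cot_def by simp
    also have "\<dots> = of_real pi * (\<i> * (1 + q ^ k) / (1 - q ^ k))"
      using cot_eq_exp[OF s] e by simp
    finally show ?case by simp
  qed
  show ?thesis using Lim_transform_eventually[OF lim ev] by simp
qed

lemma has_sum_pi_cot_telescope_pos:
  fixes z :: complex
  assumes y: "Im z > 0"
  assumes sm: "(\<lambda>n::int. pi_cot (of_int n / z) - pi_cot (of_int (n + 1) / z)) summable_on {1..}"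
  shows "((\<lambda>n::int. pi_cot (of_int n / z) - pi_cot (of_int (n + 1) / z)) has_sum
           (pi_cot (1 / z) - of_real pi * \<i>)) {1..}"
proof -
  define f where "f n = pi_cot (of_int n / z) - pi_cot (of_int (n + 1) / z)" for n :: int
  obtain S where hs: "(f has_sum S) {1..}" using sm unfolding f_def summable_on_def by blast
  define h where "h k = int k + 1" for k :: nat
  have inj: "inj_on h UNIV" by (simp add: inj_on_def h_def)
  have img: "h ` UNIV = {1..}"
  proof -
    have "x \<in> h ` UNIV" if "x \<ge> 1" for x
    proof -
      have "x = h (nat (x - 1))" using that by (simp add: h_def)
      then show ?thesis by blast
    qed
    then show ?thesis by (auto simp: h_def)
  qed
  have "((f \<circ> h) has_sum S) UNIV" using hs by (subst has_sum_reindex[OF inj, symmetric]) (simp add: img)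
  then have s1: "(f \<circ> h) sums S" by (rule has_sum_imp_sums)
  define g where "g k = pi_cot (of_nat (Suc k) / z)" for k :: nat
  have gl: "g \<longlonglongrightarrow> of_real pi * \<i>"
    unfolding g_def using pi_cot_tendsto[OF y] by (rule LIMSEQ_Suc)
  have s2: "(\<lambda>k. g k - g (Suc k)) sums (g 0 - of_real pi * \<i>)" by (rule telescope_sums'[OF gl])
  have fg: "(f \<circ> h) = (\<lambda>k. g k - g (Suc k))"
    by (rule ext) (simp add: f_def g_def h_def add.commute)
  have "S = g 0 - of_real pi * \<i>" using s1 s2 unfolding fg by (rule sums_unique2)
  then show ?thesis using hs by (simp add: f_def[abs_def] g_def)
qed

lemma has_sum_pi_cot_telescope_neg:
  fixes z :: complex
  assumes y: "Im z > 0"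
  assumes sm: "(\<lambda>n::int. pi_cot (of_int n / z) - pi_cot (of_int (n + 1) / z)) summable_on {..-2}"
  shows "((\<lambda>n::int. pi_cot (of_int n / z) - pi_cot (of_int (n + 1) / z)) has_sum
           (pi_cot (1 / z) - of_real pi * \<i>)) {..-2}"
proof -
  define f where "f n = pi_cot (of_int n / z) - pi_cot (of_int (n + 1) / z)" for n :: int
  obtain S where hs: "(f has_sum S) {..-2}" using sm unfolding f_def summable_on_def by blast
  define h where "h k = - int k - 2" for k :: nat
  have inj: "inj_on h UNIV" by (simp add: inj_on_def h_def)
  have img: "h ` UNIV = {..-2}"
  proof -
    have "x \<in> h ` UNIV" if "x \<le> -2" for x
    proof -
      have "x = h (nat (- x - 2))" using that by (simp add: h_def)
      then show ?thesis by blast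
    qed
    then show ?thesis by (auto simp: h_def)
  qed
  have "((f \<circ> h) has_sum S) UNIV" using hs by (subst has_sum_reindex[OF inj, symmetric]) (simp add: img)
  then have s1: "(f \<circ> h) sums S" by (rule has_sum_imp_sums)
  define g where "g k = pi_cot (of_nat (Suc k) / z)" for k :: nat
  have gl: "g \<longlonglongrightarrow> of_real pi * \<i>"
    unfolding g_def using pi_cot_tendsto[OF y] by (rule LIMSEQ_Suc)
  have s2: "(\<lambda>k. g k - g (Suc k)) sums (g 0 - of_real pi * \<i>)" by (rule telescope_sums'[OF gl])
  have fg: "(f \<circ> h) = (\<lambda>k. g k - g (Suc k))"
  proof (rule ext)
    fix k :: nat
    have e1: "of_int (h k) / z = - (of_nat (Suc (Suc k)) / z)" by (simp add: h_def minus_divide_left algebra_simps)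
    have e2: "of_int (h k + 1) / z = - (of_nat (Suc k) / z)" by (simp add: h_def minus_divide_left algebra_simps)
    show "(f \<circ> h) k = g k - g (Suc k)"
      by (simp only: o_def f_def e1 e2 pi_cot_minus g_def) simp
  qed
  have "S = g 0 - of_real pi * \<i>" using s1 s2 unfolding fg by (rule sums_unique2)
  then show ?thesis using hs by (simp add: f_def[abs_def] g_def)
qed

lemma has_sum_pi_cot_telescope:
  fixes z :: complex
  assumes y: "Im z > 0"
  assumes sm: "(\<lambda>n::int. pi_cot (of_int n / z) - pi_cot (of_int (n + 1) / z)) summable_on (UNIV - {0, -1})"
  shows "((\<lambda>n::int. pi_cot (of_int n / z) - pi_cot (of_int (n + 1) / z)) has_sum
           2 * (pi_cot (1 / z) - of_real pi * \<i>)) (UNIV - {0, -1})"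
proof -
  have U: "UNIV - {0, -1} = {1::int..} \<union> {..-2}" by auto
  have "((\<lambda>n::int. pi_cot (of_int n / z) - pi_cot (of_int (n + 1) / z)) has_sum
           (pi_cot (1 / z) - of_real pi * \<i>) + (pi_cot (1 / z) - of_real pi * \<i>)) ({1..} \<union> {..-2})"
    by (intro has_sum_Un_disjoint has_sum_pi_cot_telescope_pos has_sum_pi_cot_telescope_neg y
          summable_on_subset_banach[OF sm]) auto
  then show ?thesis by (simp add: U mult.commute)
qed

lemma has_sum_eisenstein_columns:
  fixes z :: complex
  assumes y: "Im z > 0"
  shows "((\<lambda>n. \<Sum>\<^sub>\<infinity>m. eisenstein_term z (m, n)) has_sum infsum (eisenstein_term z) UNIV) UNIV"
    and "\<And>n. ((\<lambda>m. eisenstein_term z (m, n)) has_sum (\<Sum>\<^sub>\<infinity>m. eisenstein_term z (m, n))) UNIV"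
proof -
  have "(eisenstein_term z has_sum infsum (eisenstein_term z) UNIV) (UNIV \<times> UNIV)"
    using eisenstein_term_summable[OF y] by simp
  then have hs: "((\<lambda>(n, m). eisenstein_term z (m, n)) has_sum infsum (eisenstein_term z) UNIV) (UNIV \<times> UNIV)"
    by (subst (asm) has_sum_swap) simp
  show col: "((\<lambda>m. eisenstein_term z (m, n)) has_sum (\<Sum>\<^sub>\<infinity>m. eisenstein_term z (m, n))) UNIV" for n
    using summable_on_SigmaD1[of "\<lambda>n m. eisenstein_term z (m, n)" UNIV "\<lambda>_. UNIV" n]
      has_sum_imp_summable[OF hs] by simp
  show "((\<lambda>n. \<Sum>\<^sub>\<infinity>m. eisenstein_term z (m, n)) has_sum infsum (eisenstein_term z) UNIV) UNIV"
    by (rule has_sum_SigmaD[OF hs[unfolded case_prod_unfold]]) (simp add: col)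
qed

lemma has_sum_pi_csc_sq_divide:
  fixes z :: complex
  assumes y: "Im z > 0"
  shows "((\<lambda>n::int. pi_csc_sq (of_int n / z)) has_sum (G2 (- 1 / z) - of_real pi ^ 2 / 3)) (UNIV - {0})"
proof -
  have bij: "bij_betw uminus (UNIV - {0::int}) (UNIV - {0})"
    by (rule bij_betwI[of _ _ _ uminus]) auto
  from eisenstein_sum_by_rows(1)[OF Im_minus_inverse_pos[OF y]] show ?thesis
    using has_sum_reindex_bij_betw[OF bij, of "\<lambda>m::int. pi_csc_sq (of_int m * (- 1 / z))"] by simp
qed

text \<open>Summing the same absolutely convergent double series by columns: each column is a
  partial fraction sum at \<open>n / z\<close>, and the cotangent parts telescope.\<close>

lemma has_sum_eisenstein_columns_nonzero:
  fixes z :: complex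
  assumes y: "Im z > 0"
  shows "((\<lambda>n. \<Sum>\<^sub>\<infinity>m. eisenstein_term z (m, n)) has_sum
      (G2 (- 1 / z) - of_real pi ^ 2 / 3 - pi_csc_sq (- 1 / z)) / z ^ 2
        - 2 * (pi_cot (1 / z) - of_real pi * \<i>) / z) (UNIV - {0, -1})"
proof -
  have z0: "z \<noteq> 0" using y by auto
  define colv where "colv n = (\<Sum>\<^sub>\<infinity>m. eisenstein_term z (m, n))" for n :: int
  define t where "t n = pi_cot (of_int n / z)" for n :: int
  define U where "U = (UNIV :: int set) - {0, -1}"
  have col: "colv n = 1 / z ^ 2 * pi_csc_sq (of_int n / z) - 1 / z * (t n - t (n + 1))" if "n \<in> U" for n
  proof -
    have "n \<noteq> 0" "n \<noteq> -1" using that by (auto simp: U_def)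
    from has_sum_unique[OF has_sum_eisenstein_columns(2)[OF y] has_sum_eisenstein_column[OF y this]]
    show ?thesis by (simp add: colv_def t_def)
  qed
  have "UNIV - {0} - {-1} = U" by (auto simp: U_def)
  with has_sum_remove_point[OF has_sum_pi_csc_sq_divide[OF y], of "-1"]
  have "((\<lambda>n::int. pi_csc_sq (of_int n / z)) has_sum
      (G2 (- 1 / z) - of_real pi ^ 2 / 3 - pi_csc_sq (- 1 / z))) U"
    by simp
  from has_sum_cmult_right[OF this, of "1 / z ^ 2"]
  have phU: "((\<lambda>n::int. 1 / z ^ 2 * pi_csc_sq (of_int n / z)) has_sum
      (G2 (- 1 / z) - of_real pi ^ 2 / 3 - pi_csc_sq (- 1 / z)) / z ^ 2) U"
    by simp
  have "colv summable_on U"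
    using has_sum_eisenstein_columns(1)[OF y] unfolding colv_def[abs_def]
    by (rule summable_on_subset_banach[OF has_sum_imp_summable]) simp
  from has_sum_diff[OF phU has_sum_infsum[OF this]]
  have "(\<lambda>n. z * (1 / z ^ 2 * pi_csc_sq (of_int n / z) - colv n)) summable_on U"
    by (intro summable_on_cmult_right) (rule has_sum_imp_summable)
  moreover have "z * (1 / z ^ 2 * pi_csc_sq (of_int n / z) - colv n) = t n - t (n + 1)" if "n \<in> U" for n
    using z0 col[OF that] by simp
  ultimately have "(\<lambda>n. t n - t (n + 1)) summable_on U"
    using summable_on_cong[of U "\<lambda>n. z * (1 / z ^ 2 * pi_csc_sq (of_int n / z) - colv n)"
        "\<lambda>n. t n - t (n + 1)"] by blast
  then have "((\<lambda>n. t n - t (n + 1)) has_sum 2 * (pi_cot (1 / z) - of_real pi * \<i>)) U"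
    unfolding t_def U_def by (rule has_sum_pi_cot_telescope[OF y])
  from has_sum_diff[OF phU has_sum_cmult_right[OF this, of "1 / z"]]
  have "((\<lambda>n. 1 / z ^ 2 * pi_csc_sq (of_int n / z) - 1 / z * (t n - t (n + 1))) has_sum
      (G2 (- 1 / z) - of_real pi ^ 2 / 3 - pi_csc_sq (- 1 / z)) / z ^ 2
        - 2 * (pi_cot (1 / z) - of_real pi * \<i>) / z) U"
    by simp
  moreover have "1 / z ^ 2 * pi_csc_sq (of_int n / z) - 1 / z * (t n - t (n + 1)) = colv n" if "n \<in> U" for n
    using col[OF that] by simp
  ultimately have "(colv has_sum (G2 (- 1 / z) - of_real pi ^ 2 / 3 - pi_csc_sq (- 1 / z)) / z ^ 2
        - 2 * (pi_cot (1 / z) - of_real pi * \<i>) / z) U"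
    using has_sum_cong[of U "\<lambda>n. 1 / z ^ 2 * pi_csc_sq (of_int n / z) - 1 / z * (t n - t (n + 1))" colv]
    by blast
  then show ?thesis unfolding U_def colv_def[abs_def] .
qed

lemma eisenstein_sum_by_columns:
  fixes z :: complex
  assumes y: "Im z > 0"
  shows "z ^ 2 * infsum (eisenstein_term z) UNIV = G2 (- 1 / z) - 3 * z ^ 2 + 2 * of_real pi * \<i> * z"
proof -
  have z0: "z \<noteq> 0" using y by auto
  define SA where "SA = infsum (eisenstein_term z) UNIV"
  define colv where "colv n = (\<Sum>\<^sub>\<infinity>m. eisenstein_term z (m, n))" for n :: int
  have "(colv has_sum SA - colv 0 - colv (-1)) (UNIV - {0} - {-1})"
    using has_sum_eisenstein_columns(1)[OF y] unfolding SA_def colv_def[abs_def]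
    by (intro has_sum_remove_point) auto
  moreover have "UNIV - {0} - {-1} = UNIV - {0, -1 :: int}" by auto
  ultimately have "(colv has_sum SA - colv 0 - colv (-1)) (UNIV - {0, -1})" by simp
  from has_sum_unique[OF this has_sum_eisenstein_columns_nonzero[OF y, folded colv_def]]
  have rest: "SA - colv 0 - colv (-1) = (G2 (- 1 / z) - of_real pi ^ 2 / 3 - pi_csc_sq (- 1 / z)) / z ^ 2
        - 2 * (pi_cot (1 / z) - of_real pi * \<i>) / z" .
  have r1: "z ^ 2 * (SA - colv 0 - colv (-1))
      = G2 (- 1 / z) - of_real pi ^ 2 / 3 - pi_csc_sq (- 1 / z) - 2 * z * (pi_cot (1 / z) - of_real pi * \<i>)"
    unfolding rest using z0 by (simp add: field_simps power2_eq_square)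
  have "((\<lambda>m. eisenstein_term z (m, 0) + eisenstein_term z (m, -1)) has_sum (colv 0 + colv (-1))) UNIV"
    unfolding colv_def by (intro has_sum_add has_sum_eisenstein_columns(2)[OF y])
  from has_sum_unique[OF this has_sum_eisenstein_columns_0_minus_1[OF y]]
  have c01: "z ^ 2 * (colv 0 + colv (-1)) = of_real pi ^ 2 / 3 + pi_csc_sq (- 1 / z) + 2 * z * pi_cot (1 / z) - 3 * z ^ 2"
    using z0 pi_cot_minus[of "1 / z"] by (simp add: field_simps power2_eq_square)
  have "z ^ 2 * SA = z ^ 2 * (SA - colv 0 - colv (-1)) + z ^ 2 * (colv 0 + colv (-1))"
    by (simp add: algebra_simps)
  also have "\<dots> = G2 (- 1 / z) - 3 * z ^ 2 + 2 * of_real pi * \<i> * z"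
    unfolding r1 c01 by (simp add: algebra_simps)
  finally show ?thesis by (simp add: SA_def)
qed

theorem G2_inversion:
  fixes z :: complex
  assumes y: "Im z > 0"
  shows "G2 (- 1 / z) = z ^ 2 * G2 z - 2 * of_real pi * \<i> * z"
proof -
  have "z ^ 2 * (G2 z - 3) = G2 (- 1 / z) - 3 * z ^ 2 + 2 * of_real pi * \<i> * z"
    using eisenstein_sum_by_rows(2)[OF y] eisenstein_sum_by_columns[OF y] by simp
  then show ?thesis by (simp add: algebra_simps)
qed

section \<open>The \<open>q\<close>-expansion and the transformation law of \<open>E\<^sub>2\<close>\<close>

lemma pi_csc_sq_eq_exp:
  fixes w :: complex
  assumes y: "Im w > 0"
  defines "Q \<equiv> exp (2 * of_real pi * \<i> * w)"
  shows "pi_csc_sq w = - 4 * of_real pi ^ 2 * (Q / (1 - Q) ^ 2)"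
proof -
  define a where "a = exp (\<i> * (of_real pi * w))"
  have a0: "a \<noteq> 0" by (simp add: a_def)
  have Qa: "Q = a * a" unfolding Q_def a_def by (simp add: exp_add[symmetric] algebra_simps)
  have nQ: "norm Q < 1"
  proof -
    have "Re (2 * of_real pi * \<i> * w) = - 2 * pi * Im w" by simp
    also have "\<dots> < 0" using y by simp
    finally show ?thesis by (simp add: Q_def)
  qed
  have Q1: "1 - Q \<noteq> 0" using nQ by auto
  have sn: "sin (of_real pi * w) = (a - inverse a) / (2 * \<i>)"
    by (simp add: sin_exp_eq a_def exp_minus)
  have ai: "(a - inverse a) = (a * a - 1) / a" using a0 by (simp add: field_simps)
  have "sin (of_real pi * w) ^ 2 = ((a * a - 1) / a / (2 * \<i>)) ^ 2" by (simp only: sn ai)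
  also have "\<dots> = (a * a - 1) ^ 2 / ((a * a) * ((2 * \<i>) ^ 2))"
    using a0 by (simp add: field_simps power2_eq_square)
  also have "\<dots> = - ((Q - 1) ^ 2 / (4 * Q))" by (simp add: Qa power2_eq_square)
  finally have sn2: "sin (of_real pi * w) ^ 2 = - ((Q - 1) ^ 2 / (4 * Q))" .
  have "pi_csc_sq w = of_real pi ^ 2 / (- ((Q - 1) ^ 2 / (4 * Q)))" by (simp add: pi_csc_sq_def sn2)
  also have "\<dots> = - 4 * of_real pi ^ 2 * (Q / (1 - Q) ^ 2)"
    using Q1 a0 by (simp add: Qa field_simps power2_eq_square)
  finally show ?thesis .
qed

lemma has_sum_of_nat_Suc_power:
  fixes Q :: "'a::{real_normed_field,banach}"
  assumes nQ: "norm Q < 1"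
  shows "((\<lambda>r. of_nat (Suc r) * Q ^ Suc r) has_sum (Q / (1 - Q) ^ 2)) UNIV"
proof -
  have s: "(\<lambda>r. Q * (of_nat (Suc r) * Q ^ r)) sums (Q * (1 / (1 - Q) ^ 2))"
    by (rule sums_mult[OF geometric_deriv_sums[OF nQ]])
  have nQ': "norm (norm Q) < 1" using nQ by simp
  have "summable (\<lambda>r. norm Q * (of_nat (Suc r) * norm Q ^ r))"
    by (rule summable_mult[OF sums_summable[OF geometric_deriv_sums[OF nQ']]])
  moreover have "norm (Q * (of_nat (Suc r) * Q ^ r)) = norm Q * (of_nat (Suc r) * norm Q ^ r)" for r
    by (simp only: norm_mult norm_power norm_of_nat)
  ultimately have "((\<lambda>r. Q * (of_nat (Suc r) * Q ^ r)) has_sum (Q * (1 / (1 - Q) ^ 2))) UNIV"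
    by (intro norm_summable_imp_has_sum[OF _ s]) simp
  then show ?thesis by (simp add: algebra_simps)
qed

lemma lambert_terms_abs_summable:
  fixes q :: complex
  assumes nq: "norm q < 1"
  shows "(\<lambda>x. norm (case x of (m, r) \<Rightarrow> of_nat (Suc r) * q ^ (Suc m * Suc r))) summable_on UNIV \<times> UNIV"
proof (subst Infinite_Sum.abs_summable_on_Sigma_iff, intro conjI ballI)
  define \<rho> where "\<rho> = norm q"
  have \<rho>: "0 \<le> \<rho>" "\<rho> < 1" using nq by (auto simp: \<rho>_def)
  have \<rho>le: "\<rho> ^ Suc m \<le> \<rho>" for m using \<rho> by (simp add: power_le_one mult_left_le)
  have \<rho>m: "0 \<le> \<rho> ^ Suc m" "\<rho> ^ Suc m < 1" for m
    using \<rho> \<rho>le[of m] by auto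
  have rowh: "((\<lambda>r. norm (of_nat (Suc r) * q ^ (Suc m * Suc r))) has_sum (\<rho> ^ Suc m / (1 - \<rho> ^ Suc m) ^ 2)) UNIV" for m
  proof -
    have "(\<lambda>r. norm (of_nat (Suc r) * q ^ (Suc m * Suc r))) = (\<lambda>r. of_nat (Suc r) * (\<rho> ^ Suc m) ^ Suc r)"
      by (rule ext) (simp only: norm_mult norm_power norm_of_nat \<rho>_def power_mult)
    then show ?thesis using has_sum_of_nat_Suc_power[of "\<rho> ^ Suc m"] \<rho>m[of m] by simp
  qed
  show "(\<lambda>r. norm (case (m, r) of (m, r) \<Rightarrow> of_nat (Suc r) * q ^ (Suc m * Suc r))) summable_on UNIV" for m
    using rowh[of m] by (auto simp: summable_on_def)
  have bnd: "\<rho> ^ Suc m / (1 - \<rho> ^ Suc m) ^ 2 \<le> \<rho> ^ Suc m / (1 - \<rho>) ^ 2" for m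
  proof -
    have "(1 - \<rho>) ^ 2 \<le> (1 - \<rho> ^ Suc m) ^ 2" using \<rho> \<rho>le[of m] by (intro power_mono) auto
    then show ?thesis using \<rho> \<rho>m[of m] by (intro divide_left_mono mult_pos_pos) auto
  qed
  have geo: "summable (\<lambda>m. \<rho> ^ Suc m / (1 - \<rho>) ^ 2)"
    using \<rho> by (intro summable_divide summable_mult summable_geometric) auto
  have "summable (\<lambda>m. \<rho> ^ Suc m / (1 - \<rho> ^ Suc m) ^ 2)"
    by (rule summable_comparison_test[OF _ geo]) (use bnd \<rho>m in \<open>auto intro!: exI[of _ 0]\<close>)
  moreover have "norm (\<Sum>\<^sub>\<infinity>r. norm (of_nat (Suc r) * q ^ (Suc m * Suc r))) = \<rho> ^ Suc m / (1 - \<rho> ^ Suc m) ^ 2" for m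
    using infsumI[OF rowh[of m]] \<rho>m[of m] by simp
  ultimately show "(\<lambda>m. norm (\<Sum>\<^sub>\<infinity>r. norm (case (m, r) of (m, r) \<Rightarrow> of_nat (Suc r) * q ^ (Suc m * Suc r))))
      summable_on UNIV"
    using summable_nonneg_imp_summable_on \<rho>m by simp
qed

lemma bij_betw_divisor_pairs:
  "bij_betw (\<lambda>(m, r). (Suc m * Suc r, Suc r)) (UNIV \<times> UNIV) (SIGMA N:{1::nat..}. {d. d dvd N})"
proof (rule bij_betwI[where g = "\<lambda>(N, d). (N div d - 1, d - 1)"])
  show "(\<lambda>(N, d). (N div d - 1, d - 1)) \<in> (SIGMA N:{1::nat..}. {d. d dvd N}) \<rightarrow> UNIV \<times> UNIV"
    by auto
  show "(\<lambda>(m, r). (Suc m * Suc r, Suc r)) \<in> UNIV \<times> UNIV \<rightarrow> (SIGMA N:{1::nat..}. {d. d dvd N})"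
    by (auto simp del: mult_Suc mult_Suc_right)
  show "(case (case x of (m, r) \<Rightarrow> (Suc m * Suc r, Suc r)) of (N, d) \<Rightarrow> (N div d - 1, d - 1)) = x" for x
    by (cases x) (simp del: mult_Suc mult_Suc_right)
  show "(case (case y of (N, d) \<Rightarrow> (N div d - 1, d - 1)) of (m, r) \<Rightarrow> (Suc m * Suc r, Suc r)) = y"
    if "y \<in> (SIGMA N:{1::nat..}. {d. d dvd N})" for y
  proof (cases y)
    case (Pair N d)
    with that have "N \<ge> 1" and dvd: "d dvd N" by auto
    then have "d \<ge> 1" "d \<le> N" by (auto intro: dvd_imp_le)
    then have "Suc (N div d - 1) = N div d" "Suc (d - 1) = d"
      by (simp_all add: div_greater_zero_iff)
    then show ?thesis using dvd by (simp add: Pair del: mult_Suc mult_Suc_right)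
  qed
qed

text \<open>The Lambert series identity \<open>\<Sum>\<^sub>k q\<^sup>k / (1 - q\<^sup>k)\<^sup>2 = \<Sum>\<^sub>n \<sigma>\<^sub>1(n) q\<^sup>n\<close>: expand each term as
  \<open>\<Sum>\<^sub>r r q\<^sup>k\<^sup>r\<close> and regroup the absolutely convergent double series by \<open>n = k r\<close>.\<close>

lemma has_sum_sigma1_power:
  fixes q T :: complex
  assumes nq: "norm q < 1"
  assumes hT: "((\<lambda>k. q ^ Suc k / (1 - q ^ Suc k) ^ 2) has_sum T) UNIV"
  shows "((\<lambda>n. of_nat (sigma1 (Suc n)) * q ^ Suc n) has_sum T) UNIV"
proof -
  define f where "f = (\<lambda>(m::nat, r::nat). of_nat (Suc r) * q ^ (Suc m * Suc r))"
  define B where "B = (SIGMA N:{1::nat..}. {d. d dvd N})"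
  define F where "F = (\<lambda>(N::nat, d::nat). of_nat d * q ^ N)"
  have "f summable_on UNIV \<times> UNIV"
    unfolding f_def by (rule abs_summable_summable[OF lambert_terms_abs_summable[OF nq]])
  then have fh: "(f has_sum infsum f (UNIV \<times> UNIV)) (UNIV \<times> UNIV)" by simp
  have "((\<lambda>m. q ^ Suc m / (1 - q ^ Suc m) ^ 2) has_sum infsum f (UNIV \<times> UNIV)) UNIV"
  proof (rule has_sum_SigmaD[OF fh])
    fix m :: nat
    have "norm q ^ Suc m \<le> norm q" using nq by (simp add: power_le_one mult_left_le)
    then have "norm (q ^ Suc m) < 1" using nq by (simp only: norm_power)
    moreover have "(\<lambda>r. f (m, r)) = (\<lambda>r. of_nat (Suc r) * (q ^ Suc m) ^ Suc r)"
      by (rule ext) (simp only: f_def prod.case power_mult)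
    ultimately show "((\<lambda>r. f (m, r)) has_sum (q ^ Suc m / (1 - q ^ Suc m) ^ 2)) UNIV"
      using has_sum_of_nat_Suc_power by metis
  qed
  then have T: "T = infsum f (UNIV \<times> UNIV)" using hT by (rule has_sum_unique[rotated])
  have "f = (\<lambda>x. F ((\<lambda>(m, r). (Suc m * Suc r, Suc r)) x))" by (rule ext) (auto simp: f_def F_def)
  with fh have FB: "(F has_sum T) B"
    unfolding T B_def by (simp only: has_sum_reindex_bij_betw[OF bij_betw_divisor_pairs])
  have "((\<lambda>N. of_nat (sigma1 N) * q ^ N) has_sum T) {1..}"
  proof (rule has_sum_SigmaD[OF FB[unfolded B_def]])
    fix N :: nat assume "N \<in> {1..}"
    then have "((\<lambda>d. F (N, d)) has_sum (\<Sum>d\<in>{d. d dvd N}. F (N, d))) {d. d dvd N}"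
      by (intro has_sum_finite) simp
    then show "((\<lambda>d. F (N, d)) has_sum (of_nat (sigma1 N) * q ^ N)) {d. d dvd N}"
      by (simp add: F_def sigma1_def sum_distrib_right of_nat_sum)
  qed
  moreover have "{1::nat..} = range Suc" by (auto simp: image_iff Suc_le_eq gr0_conv_Suc)
  ultimately show ?thesis by (simp add: has_sum_reindex o_def)
qed

lemma has_sum_G2_positive_rows:
  fixes \<tau> :: complex
  assumes y: "Im \<tau> > 0"
  shows "((\<lambda>k. pi_csc_sq (of_nat (Suc k) * \<tau>)) has_sum (G2 \<tau> - of_real pi ^ 2 / 3) / 2) UNIV"
proof -
  have rows: "((\<lambda>m::int. pi_csc_sq (of_int m * \<tau>)) has_sum (G2 \<tau> - of_real pi ^ 2 / 3)) (UNIV - {0})"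
    by (rule eisenstein_sum_by_rows(1)[OF y])
  have "(\<lambda>m::int. pi_csc_sq (of_int m * \<tau>)) summable_on {1..}"
    by (rule summable_on_subset_banach[OF has_sum_imp_summable[OF rows]]) auto
  then obtain P where P: "((\<lambda>m::int. pi_csc_sq (of_int m * \<tau>)) has_sum P) {1..}"
    by (auto simp: summable_on_def)
  have bij: "bij_betw uminus {1::int..} {..-1}"
    by (rule bij_betwI[of _ _ _ uminus]) auto
  have "((\<lambda>m::int. pi_csc_sq (of_int (- m) * \<tau>)) has_sum P) {1..}"
    using P by (simp add: pi_csc_sq_minus[of "of_int _ * \<tau>", symmetric])
  then have "((\<lambda>m::int. pi_csc_sq (of_int m * \<tau>)) has_sum P) {..-1}"
    using has_sum_reindex_bij_betw[OF bij, of "\<lambda>m::int. pi_csc_sq (of_int m * \<tau>)"] by simp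
  with P have "((\<lambda>m::int. pi_csc_sq (of_int m * \<tau>)) has_sum (P + P)) ({1..} \<union> {..-1})"
    by (intro has_sum_Un_disjoint) auto
  moreover have "{1::int..} \<union> {..-1} = UNIV - {0}" by auto
  ultimately have "G2 \<tau> - of_real pi ^ 2 / 3 = P + P"
    using rows has_sum_unique by metis
  then have "(G2 \<tau> - of_real pi ^ 2 / 3) / 2 = P" by simp
  moreover have "((\<lambda>k. pi_csc_sq (of_nat (Suc k) * \<tau>)) has_sum P) UNIV"
  proof -
    have "bij_betw (\<lambda>k::nat. int k + 1) UNIV {1..}"
      by (rule bij_betwI[of _ _ _ "\<lambda>m. nat (m - 1)"]) auto
    from has_sum_reindex_bij_betw[OF this, of "\<lambda>m::int. pi_csc_sq (of_int m * \<tau>)"] P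
    show ?thesis by (simp add: add.commute)
  qed
  ultimately show ?thesis by (simp only:)
qed

text \<open>Comparing \<open>q\<close>-expansions: the rows of \<open>G\<^sub>2\<close> are Lambert series terms.\<close>

lemma Eisenstein_E2_eq_G2:
  fixes \<tau> :: complex
  assumes y: "Im \<tau> > 0"
  shows "Eisenstein_E2 \<tau> = 3 / of_real pi ^ 2 * G2 \<tau>"
proof -
  define q where "q = exp (2 * of_real pi * \<i> * \<tau>)"
  have nq: "norm q < 1" using y by (simp add: q_def)
  define P where "P = (G2 \<tau> - of_real pi ^ 2 / 3) / 2"
  have rows_nat: "((\<lambda>k. pi_csc_sq (of_nat (Suc k) * \<tau>)) has_sum P) UNIV"
    unfolding P_def by (rule has_sum_G2_positive_rows[OF y])
  have q_exp: "pi_csc_sq (of_nat (Suc k) * \<tau>) = - 4 * of_real pi ^ 2 * (q ^ Suc k / (1 - q ^ Suc k) ^ 2)" for k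
  proof -
    have "exp (2 * of_real pi * \<i> * (of_nat (Suc k) * \<tau>)) = q ^ Suc k"
      unfolding q_def by (subst exp_of_nat_mult[symmetric]) (simp add: algebra_simps)
    then show ?thesis using pi_csc_sq_eq_exp[of "of_nat (Suc k) * \<tau>"] y by simp
  qed
  from has_sum_cmult_right[OF rows_nat[unfolded q_exp], of "- 1 / (4 * of_real pi ^ 2)"]
  have "((\<lambda>k. q ^ Suc k / (1 - q ^ Suc k) ^ 2) has_sum - P / (4 * of_real pi ^ 2)) UNIV"
    by simp
  from has_sum_sigma1_power[OF nq this]
  have "(\<Sum>n. of_nat (sigma1 (Suc n)) * q ^ Suc n) = - P / (4 * of_real pi ^ 2)"
    by (simp add: has_sum_imp_sums sums_unique[symmetric])
  moreover have "exp (complex_of_real (2 * pi) * \<i> * \<tau>) = q" by (simp add: q_def)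
  ultimately have "Eisenstein_E2 \<tau> = 1 - 24 * (- P / (4 * of_real pi ^ 2))"
    unfolding Eisenstein_E2_def by simp
  also have "\<dots> = 3 / of_real pi ^ 2 * G2 \<tau>"
    by (simp add: P_def field_simps)
  finally show ?thesis .
qed

lemma Eisenstein_E2_add_of_int: "Eisenstein_E2 (\<tau> + of_int n) = Eisenstein_E2 \<tau>"
proof -
  have "exp (2 * of_real pi * \<i> * (\<tau> + of_int n)) = exp (2 * of_real pi * \<i> * \<tau>)"
    using exp_integer_2pi[of "of_int n"] by (simp add: algebra_simps exp_add)
  then show ?thesis by (simp add: Eisenstein_E2_def)
qed

theorem Eisenstein_E2_inversion:
  fixes z :: complex
  assumes y: "Im z > 0"
  shows "Eisenstein_E2 (- 1 / z) = z ^ 2 * Eisenstein_E2 z - 6 * \<i> * z / of_real pi"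
proof -
  have "Eisenstein_E2 (- 1 / z) = 3 / of_real pi ^ 2 * G2 (- 1 / z)"
    by (rule Eisenstein_E2_eq_G2[OF Im_minus_inverse_pos[OF y]])
  also have "\<dots> = 3 / of_real pi ^ 2 * (z ^ 2 * G2 z - 2 * of_real pi * \<i> * z)"
    by (simp only: G2_inversion[OF y])
  also have "\<dots> = z ^ 2 * Eisenstein_E2 z - 6 * \<i> * z / of_real pi"
    by (simp add: Eisenstein_E2_eq_G2[OF y] field_simps power2_eq_square)
  finally show ?thesis .
qed

lemma Im_moebius_act_1_n_c:
  fixes z :: complex and n c :: int
  assumes y: "Im z > 0"
  shows "Im (moebius_act (1, n, c, c * n + 1) z) > 0"
proof -
  define X where "X = of_int c * (z + of_int n) + 1"
  have "Im (moebius_act (1, n, c, c * n + 1) z) = Im ((z + of_int n) / X)"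
    by (simp add: moebius_act_def X_def algebra_simps)
  also have "\<dots> = Im z / (cmod X)\<^sup>2"
    by (simp add: Im_divide cmod_power2 X_def algebra_simps)
  finally show ?thesis
    using y by (cases "c = 0") (auto simp: X_def complex_eq_iff)
qed

lemma Eisenstein_E2_moebius_act_1_n_c:
  fixes z :: complex and n c :: int
  assumes y: "Im z > 0"
  defines "X \<equiv> automorphy_factor (1, n, c, c * n + 1) z"
  shows "Eisenstein_E2 (moebius_act (1, n, c, c * n + 1) z) =
           X ^ 2 * Eisenstein_E2 z - 6 * \<i> * of_int c * X / of_real pi"
proof -
  define \<tau> where "\<tau> = z + of_int n"
  have yt: "Im \<tau> > 0" using y by (simp add: \<tau>_def)
  have t0: "\<tau> \<noteq> 0" using yt by auto
  have X: "X = of_int c * \<tau> + 1"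
    by (simp add: X_def automorphy_factor_def \<tau>_def algebra_simps)
  have m: "moebius_act (1, n, c, c * n + 1) z = \<tau> / X"
    by (simp add: moebius_act_def X \<tau>_def algebra_simps)
  have E\<tau>: "Eisenstein_E2 \<tau> = Eisenstein_E2 z" by (simp add: \<tau>_def Eisenstein_E2_add_of_int)
  show ?thesis
  proof (cases "c = 0")
    case True
    then show ?thesis unfolding m X using E\<tau> by simp
  next
    case False
    text \<open>\<open>\<tau> / (c \<tau> + 1) = -1 / u\<close> with \<open>u = -1/\<tau> - c\<close>, so two inversions and a translation suffice.\<close>
    define u where "u = - 1 / \<tau> - of_int c"
    have yu: "Im u > 0" using Im_minus_inverse_pos[OF yt] by (simp add: u_def)
    have uX: "u = - X / \<tau>" using t0 by (simp add: u_def X field_simps)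
    then have X0: "X \<noteq> 0" using yu by auto
    have "Eisenstein_E2 (\<tau> / X) = Eisenstein_E2 (- 1 / u)"
      using t0 X0 by (simp add: uX)
    also have "\<dots> = u ^ 2 * Eisenstein_E2 u - 6 * \<i> * u / of_real pi"
      by (rule Eisenstein_E2_inversion[OF yu])
    also have "Eisenstein_E2 u = Eisenstein_E2 (- 1 / \<tau>)"
      using Eisenstein_E2_add_of_int[of u c] by (simp add: u_def)
    also have "\<dots> = \<tau> ^ 2 * Eisenstein_E2 \<tau> - 6 * \<i> * \<tau> / of_real pi"
      by (rule Eisenstein_E2_inversion[OF yt])
    also have "u ^ 2 * (\<tau> ^ 2 * Eisenstein_E2 \<tau> - 6 * \<i> * \<tau> / of_real pi) - 6 * \<i> * u / of_real pi
        = X ^ 2 * Eisenstein_E2 \<tau> - 6 * \<i> * of_int c * X / of_real pi"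
      using t0 by (simp add: uX X field_simps power2_eq_square)
    finally show ?thesis by (simp add: m E\<tau>)
  qed
qed

section \<open>Relations between polynomials in an automorphy factor\<close>

definition poly3 :: "(nat \<times> nat \<times> nat) set \<Rightarrow> (nat \<times> nat \<times> nat \<Rightarrow> complex) \<Rightarrow>
    complex \<Rightarrow> complex \<Rightarrow> complex \<Rightarrow> complex" where
  "poly3 S c x y t = (\<Sum>(a, b, e)\<in>S. c (a, b, e) * x ^ a * y ^ b * t ^ e)"

lemma poly_eq_0_if_infinite_zeros:
  fixes p :: "complex poly"
  assumes "infinite A" "\<And>x. x \<in> A \<Longrightarrow> poly p x = 0"
  shows "p = 0"
  using assms poly_roots_finite[of p] finite_subset[of A "{x. poly p x = 0}"] by blast

lemma coeff_mult_at_degree_bounds: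
  fixes p q :: "'a::comm_semiring_1 poly"
  assumes "degree p \<le> m" "degree q \<le> n"
  shows "Polynomial.coeff (p * q) (m + n) = Polynomial.coeff p m * Polynomial.coeff q n"
proof -
  have "Polynomial.coeff (p * q) (m + n) = (\<Sum>i\<le>m + n. Polynomial.coeff p i * Polynomial.coeff q (m + n - i))"
    by (rule coeff_mult)
  also have "\<dots> = (\<Sum>i\<in>{m}. Polynomial.coeff p i * Polynomial.coeff q (m + n - i))"
  proof (rule sum.mono_neutral_right)
    show "\<forall>i\<in>{..m + n} - {m}. Polynomial.coeff p i * Polynomial.coeff q (m + n - i) = 0"
    proof
      fix i assume i: "i \<in> {..m + n} - {m}"
      show "Polynomial.coeff p i * Polynomial.coeff q (m + n - i) = 0"
      proof (cases "i < m")
        case True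
        then have "m + n - i > n" using i by auto
        then show ?thesis using assms(2) by (simp add: coeff_eq_0)
      next
        case False
        then have "i > m" using i by auto
        then show ?thesis using assms(1) by (simp add: coeff_eq_0)
      qed
    qed
  qed auto
  finally show ?thesis by simp
qed

lemma coeff_power_at_degree_bound:
  fixes p :: "'a::comm_semiring_1 poly"
  assumes "degree p \<le> m"
  shows "Polynomial.coeff (p ^ a) (m * a) = Polynomial.coeff p m ^ a"
proof (induction a)
  case (Suc a)
  have "degree (p ^ a) \<le> m * a"
    using degree_power_le[of p a] assms by (meson le_trans mult_le_mono1)
  then have "Polynomial.coeff (p * p ^ a) (m + m * a) = Polynomial.coeff p m * Polynomial.coeff (p ^ a) (m * a)"
    by (rule coeff_mult_at_degree_bounds[OF assms])
  then show ?case using Suc by simp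
qed simp

definition graded_poly :: "(nat \<Rightarrow> complex) \<Rightarrow> nat \<Rightarrow> complex poly" where
  "graded_poly \<phi> u = (\<Sum>i\<in>{1..u}. Polynomial.monom (\<phi> i) i)"

lemma poly_graded_poly: "poly (graded_poly \<phi> u) X = (\<Sum>i=1..u. \<phi> i * X ^ i)"
  by (simp add: graded_poly_def poly_sum poly_monom)

lemma degree_graded_poly: "degree (graded_poly \<phi> u) \<le> u"
  unfolding graded_poly_def by (rule degree_sum_le) (auto intro: order_trans[OF degree_monom_le])

lemma coeff_graded_poly_top: "u \<ge> 1 \<Longrightarrow> Polynomial.coeff (graded_poly \<phi> u) u = \<phi> u"
  by (simp add: graded_poly_def coeff_sum coeff_monom)

text \<open>A relation evaluated at \<open>X \<mapsto> (p X, q X, X\<^sup>2 E + s X + r X)\<close> for infinitely many \<open>X\<close> and \<open>s\<close>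
  holds for all \<open>s\<close> and \<open>X\<close>; for \<open>X \<noteq> 0\<close> the third argument then takes every value.\<close>

lemma poly3_vanishes_everywhere:
  fixes \<kappa> E :: complex and K :: "complex set" and p q r :: "complex poly"
  assumes fin: "finite S" and \<kappa>: "\<kappa> \<noteq> 0" and K: "infinite K" "0 \<notin> K"
    and V: "\<And>c n. c \<in> K \<Longrightarrow> let X = c * z + c * of_int n + 1 in
              poly3 S cf (poly p X) (poly q X) (X ^ 2 * E + \<kappa> * c * X + poly r X) = 0"
    and X: "X \<noteq> 0"
  shows "poly3 S cf (poly p X) (poly q X) T = 0"
proof -
  have in_X: "poly3 S cf (poly p X) (poly q X) (X ^ 2 * E + \<kappa> * c * X + poly r X) = 0"
    if c: "c \<in> K" for c X
  proof -
    define P where "P = (\<Sum>(a, b, e)\<in>S. Polynomial.smult (cf (a, b, e)) (p ^ a * q ^ b * ([:0, \<kappa> * c, E:] + r) ^ e))"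
    have P_eval: "poly P X = poly3 S cf (poly p X) (poly q X) (X ^ 2 * E + \<kappa> * c * X + poly r X)" for X
      unfolding P_def poly3_def poly_sum
      by (intro sum.cong refl) (auto simp: algebra_simps power2_eq_square)
    have "c \<noteq> 0" using c K(2) by auto
    then have "inj (\<lambda>n::int. c * z + c * of_int n + 1)" by (auto simp: inj_on_def)
    then have "infinite (range (\<lambda>n::int. c * z + c * of_int n + 1))"
      using finite_imageD infinite_UNIV_int by blast
    then have "P = 0"
      by (rule poly_eq_0_if_infinite_zeros) (use V[OF c] in \<open>auto simp: P_eval Let_def\<close>)
    then show ?thesis by (simp flip: P_eval)
  qed
  define s where "s = (T - X ^ 2 * E - poly r X) / X"
  define P where "P = (\<Sum>(a, b, e)\<in>S. Polynomial.smult (cf (a, b, e) * poly p X ^ a * poly q X ^ b) ([:X ^ 2 * E + poly r X, X:] ^ e))"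
  have P_eval: "poly P s' = poly3 S cf (poly p X) (poly q X) (X ^ 2 * E + s' * X + poly r X)" for s'
    unfolding P_def poly3_def poly_sum by (intro sum.cong refl) (auto simp: algebra_simps)
  have "inj_on (\<lambda>c. \<kappa> * c) K" using \<kappa> by (auto simp: inj_on_def)
  then have "infinite ((\<lambda>c. \<kappa> * c) ` K)" using K(1) finite_imageD by blast
  then have "P = 0"
    by (rule poly_eq_0_if_infinite_zeros) (auto simp: P_eval in_X)
  then have "poly3 S cf (poly p X) (poly q X) (X ^ 2 * E + s * X + poly r X) = 0"
    by (simp flip: P_eval)
  moreover have "X ^ 2 * E + s * X + poly r X = T" using X by (simp add: s_def field_simps)
  ultimately show ?thesis by simp
qed

lemma poly3_coeff_last_vanishes:
  assumes fin: "finite S" and V: "\<And>T. poly3 S cf x y T = 0"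
  shows "poly3 {m\<in>S. snd (snd m) = e0} cf x y 1 = 0"
proof -
  define P where "P = (\<Sum>(a, b, e)\<in>S. Polynomial.smult (cf (a, b, e) * x ^ a * y ^ b) (Polynomial.monom 1 e))"
  have "poly P T = poly3 S cf x y T" for T
    unfolding P_def poly3_def poly_sum by (intro sum.cong refl) (auto simp: poly_monom)
  then have "P = 0" by (intro poly_eq_0_if_infinite_zeros[of UNIV]) (auto simp: V infinite_UNIV_char_0)
  then have "0 = Polynomial.coeff P e0" by simp
  also have "\<dots> = (\<Sum>m\<in>S. if snd (snd m) = e0 then (case m of (a, b, e) \<Rightarrow> cf (a, b, e) * x ^ a * y ^ b * 1 ^ e) else 0)"
    unfolding P_def coeff_sum by (intro sum.cong refl) (auto simp: coeff_monom)
  also have "\<dots> = poly3 {m\<in>S. snd (snd m) = e0} cf x y 1"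
    unfolding poly3_def using fin by (rule sum.inter_filter[symmetric])
  finally show ?thesis ..
qed

lemma poly3_top_weight_vanishes:
  fixes p q :: "complex poly"
  assumes fin: "finite S" and V: "\<And>X. X \<noteq> 0 \<Longrightarrow> poly3 S cf (poly p X) (poly q X) 1 = 0"
    and deg: "degree p \<le> u" "degree q \<le> v"
    and top: "\<And>a b e. (a, b, e) \<in> S \<Longrightarrow> cf (a, b, e) \<noteq> 0 \<Longrightarrow> u * a + v * b \<le> M"
  shows "poly3 {(a, b, e)\<in>S. u * a + v * b = M} cf (Polynomial.coeff p u) (Polynomial.coeff q v) 1 = 0"
proof -
  define P where "P = (\<Sum>(a, b, e)\<in>S. Polynomial.smult (cf (a, b, e)) (p ^ a * q ^ b))"
  have "poly P X = poly3 S cf (poly p X) (poly q X) 1" for X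
    unfolding P_def poly3_def poly_sum by (intro sum.cong refl) (auto simp: algebra_simps)
  then have "P = 0"
    by (intro poly_eq_0_if_infinite_zeros[of "- {0}"]) (auto simp: V infinite_UNIV_char_0)
  then have "0 = Polynomial.coeff P M" by simp
  also have "\<dots> = (\<Sum>(a, b, e)\<in>S. cf (a, b, e) * Polynomial.coeff (p ^ a * q ^ b) M)"
    unfolding P_def coeff_sum by (intro sum.cong refl) auto
  also have "\<dots> = (\<Sum>(a, b, e)\<in>{(a, b, e)\<in>S. u * a + v * b = M}. cf (a, b, e) * Polynomial.coeff (p ^ a * q ^ b) M)"
  proof (rule sum.mono_neutral_right[OF fin])
    have vanish: "Polynomial.coeff (p ^ a * q ^ b) M = 0" if "u * a + v * b < M" for a b
    proof (rule coeff_eq_0)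
      have "degree (p ^ a * q ^ b) \<le> u * a + v * b"
        using degree_power_le[of p a] degree_power_le[of q b] deg degree_mult_le[of "p ^ a" "q ^ b"]
        by (meson add_le_mono le_trans mult_le_mono1 mult.commute)
      then show "degree (p ^ a * q ^ b) < M" using that by linarith
    qed
    show "\<forall>m\<in>S - {(a, b, e)\<in>S. u * a + v * b = M}.
        (case m of (a, b, e) \<Rightarrow> cf (a, b, e) * Polynomial.coeff (p ^ a * q ^ b) M) = 0"
    proof
      fix m assume m: "m \<in> S - {(a, b, e)\<in>S. u * a + v * b = M}"
      obtain a b e where me: "m = (a, b, e)" by (cases m)
      show "(case m of (a, b, e) \<Rightarrow> cf (a, b, e) * Polynomial.coeff (p ^ a * q ^ b) M) = 0"
      proof (cases "cf (a, b, e) = 0")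
        case False
        then have "u * a + v * b < M" using top[of a b e] m me by auto
        then show ?thesis by (simp add: me vanish)
      qed (simp add: me)
    qed
  qed auto
  also have "\<dots> = poly3 {(a, b, e)\<in>S. u * a + v * b = M} cf (Polynomial.coeff p u) (Polynomial.coeff q v) 1"
    unfolding poly3_def
  proof (rule sum.cong[OF refl])
    fix x assume "x \<in> {(a, b, e)\<in>S. u * a + v * b = M}"
    then obtain a b e where x: "x = (a, b, e)" and M: "u * a + v * b = M" by auto
    have "degree (p ^ a) \<le> u * a" "degree (q ^ b) \<le> v * b"
      using degree_power_le[of p a] degree_power_le[of q b] deg by (meson le_trans mult_le_mono1)+
    from coeff_mult_at_degree_bounds[OF this] M
    have "Polynomial.coeff (p ^ a * q ^ b) M = Polynomial.coeff (p ^ a) (u * a) * Polynomial.coeff (q ^ b) (v * b)"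
      by simp
    then show "(case x of (a, b, e) \<Rightarrow> cf (a, b, e) * Polynomial.coeff (p ^ a * q ^ b) M) =
        (case x of (a, b, e) \<Rightarrow> cf (a, b, e) * Polynomial.coeff p u ^ a * Polynomial.coeff q v ^ b * 1 ^ e)"
      using deg by (simp add: x coeff_power_at_degree_bound)
  qed
  finally show ?thesis by simp
qed

definition weighted_homogeneous :: "nat \<Rightarrow> nat \<Rightarrow> nat \<Rightarrow> nat \<Rightarrow> (nat \<times> nat \<times> nat) set \<Rightarrow> bool" where
  "weighted_homogeneous u v M e0 L \<longleftrightarrow> (\<forall>(a, b, e)\<in>L. u * a + v * b = M \<and> e = e0)"

lemma poly3_weighted_homogeneous_scale:
  assumes "weighted_homogeneous u v M e0 L"
  shows "poly3 L cf (l ^ u * x) (l ^ v * y) t = l ^ M * poly3 L cf x y t"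
  unfolding poly3_def sum_distrib_left
proof (rule sum.cong[OF refl])
  fix m assume "m \<in> L"
  then obtain a b e where m: "m = (a, b, e)" and "M = u * a + v * b"
    using assms by (cases m) (auto simp: weighted_homogeneous_def)
  then have "l ^ M = (l ^ u) ^ a * (l ^ v) ^ b" by (simp add: power_add power_mult)
  then show "(case m of (a, b, e) \<Rightarrow> cf (a, b, e) * (l ^ u * x) ^ a * (l ^ v * y) ^ b * t ^ e) =
      l ^ M * (case m of (a, b, e) \<Rightarrow> cf (a, b, e) * x ^ a * y ^ b * t ^ e)"
    by (simp add: m power_mult_distrib mult_ac)
qed

text \<open>For fixed weight and \<open>e\<close>, the exponent \<open>a\<close> determines the monomial, so \<open>Y \<mapsto> poly3 L c Y 1 1\<close> is
  a nonzero polynomial.\<close>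

lemma finite_zeros_poly3_weighted_homogeneous:
  assumes hom: "weighted_homogeneous u v M e0 L" and v: "v \<ge> 1"
    and L: "finite L" "L \<noteq> {}" "\<And>m. m \<in> L \<Longrightarrow> cf m \<noteq> 0"
  shows "finite {Y. poly3 L cf Y 1 1 = 0}"
proof -
  define r where "r = (\<Sum>(a, b, e)\<in>L. Polynomial.smult (cf (a, b, e)) (Polynomial.monom 1 a))"
  have r_eval: "poly r Y = poly3 L cf Y 1 1" for Y
    unfolding r_def poly3_def poly_sum by (intro sum.cong refl) (auto simp: poly_monom)
  obtain a0 b0 e0' where m0: "(a0, b0, e0') \<in> L" using L(2) by (metis ex_in_conv prod_cases3)
  have uniq: "m = (a0, b0, e0')" if "m \<in> L" "fst m = a0" for m
  proof -
    obtain a b e where m: "m = (a, b, e)" by (cases m)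
    have a: "a = a0" using that(2) m by simp
    have "u * a0 + v * b = M" "e = e0" using that(1) hom by (auto simp: m a weighted_homogeneous_def)
    moreover have "u * a0 + v * b0 = M" "e0' = e0" using m0 hom by (auto simp: weighted_homogeneous_def)
    ultimately have "v * b = v * b0" "e = e0'" by (metis add_left_cancel, simp)
    then show ?thesis using v m a by simp
  qed
  have "Polynomial.coeff r a0 = (\<Sum>m\<in>L. if fst m = a0 then cf m else 0)"
    unfolding r_def coeff_sum by (intro sum.cong refl) (auto simp: coeff_monom)
  also have "\<dots> = (\<Sum>m\<in>{(a0, b0, e0')}. if fst m = a0 then cf m else 0)"
  proof (rule sum.mono_neutral_right)
    show "\<forall>m\<in>L - {(a0, b0, e0')}. (if fst m = a0 then cf m else 0) = 0"
      using uniq by fastforce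
  qed (use L(1) m0 in auto)
  finally have "Polynomial.coeff r a0 \<noteq> 0" using L(3)[OF m0] by simp
  then have "r \<noteq> 0" by auto
  then show ?thesis using poly_roots_finite[of r] by (simp add: r_eval)
qed

lemma exists_nth_root_complex:
  fixes w :: complex
  assumes "w \<noteq> 0" "n \<ge> 1"
  shows "\<exists>l. l ^ n = w"
proof -
  have "exp (Ln w / of_nat n) ^ n = exp (of_nat n * (Ln w / of_nat n))"
    by (rule exp_of_nat_mult[symmetric])
  also have "\<dots> = w" using assms by simp
  finally show ?thesis by blast
qed

text \<open>On a set where \<open>\<phi>\<close> and \<open>\<psi>\<close> do not vanish, a weighted homogeneous relation forces
  \<open>\<phi>\<^sup>v / \<psi>\<^sup>u\<close> to be a \<open>v\<close>-th power of a zero of a fixed nonzero polynomial.\<close>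

lemma finite_power_ratio_values:
  fixes \<phi> \<psi> :: "complex \<Rightarrow> complex"
  assumes hom: "weighted_homogeneous u v M e0 L" and v: "v \<ge> 1"
    and L: "finite L" "L \<noteq> {}" "\<And>m. m \<in> L \<Longrightarrow> cf m \<noteq> 0"
    and nz: "\<And>z. z \<in> B \<Longrightarrow> \<phi> z \<noteq> 0 \<and> \<psi> z \<noteq> 0"
    and V: "\<And>z. z \<in> B \<Longrightarrow> poly3 L cf (\<phi> z) (\<psi> z) 1 = 0"
  shows "finite ((\<lambda>z. \<phi> z ^ v / \<psi> z ^ u) ` B)"
proof (rule finite_subset)
  show "(\<lambda>z. \<phi> z ^ v / \<psi> z ^ u) ` B \<subseteq> (\<lambda>Y. Y ^ v) ` {Y. poly3 L cf Y 1 1 = 0}"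
  proof clarify
    fix z assume z: "z \<in> B"
    then obtain l where l: "l ^ v = 1 / \<psi> z"
      using exists_nth_root_complex[of "1 / \<psi> z" v] nz v by auto
    have "poly3 L cf (l ^ u * \<phi> z) 1 1 = poly3 L cf (l ^ u * \<phi> z) (l ^ v * \<psi> z) 1"
      using l nz[OF z] by simp
    also have "\<dots> = 0"
      by (simp add: poly3_weighted_homogeneous_scale[OF hom] V[OF z])
    finally have "l ^ u * \<phi> z \<in> {Y. poly3 L cf Y 1 1 = 0}" by simp
    moreover have "(l ^ u * \<phi> z) ^ v = \<phi> z ^ v / \<psi> z ^ u"
      by (simp add: power_mult_distrib flip: power_mult)
         (simp add: mult.commute[of u v] power_mult l power_one_over)
    ultimately show "\<phi> z ^ v / \<psi> z ^ u \<in> (\<lambda>Y. Y ^ v) ` {Y. poly3 L cf Y 1 1 = 0}"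
      by (metis image_eqI)
  qed
  show "finite ((\<lambda>Y. Y ^ v) ` {Y. poly3 L cf Y 1 1 = 0})"
    using finite_zeros_poly3_weighted_homogeneous[OF hom v L] by simp
qed

lemma open_upper_half_plane: "open upper_half_plane"
  unfolding upper_half_plane_def by (rule open_halfspace_Im_gt)

lemma connected_upper_half_plane: "connected upper_half_plane"
  unfolding upper_half_plane_def by (intro convex_connected convex_halfspace_Im_gt)

lemma exists_ball_nonzero:
  fixes \<phi> \<psi> :: "complex \<Rightarrow> complex"
  assumes h1: "\<phi> holomorphic_on upper_half_plane" and h2: "\<psi> holomorphic_on upper_half_plane"
  and n1: "\<exists>z\<in>upper_half_plane. \<phi> z \<noteq> 0" and n2: "\<exists>z\<in>upper_half_plane. \<psi> z \<noteq> 0"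
  shows "\<exists>z0 r. r > 0 \<and> ball z0 r \<subseteq> upper_half_plane \<and> (\<forall>z\<in>ball z0 r. \<phi> z \<noteq> 0 \<and> \<psi> z \<noteq> 0)"
proof -
  have c1: "continuous_on upper_half_plane \<phi>" using h1 by (rule holomorphic_on_imp_continuous_on)
  have c2: "continuous_on upper_half_plane \<psi>" using h2 by (rule holomorphic_on_imp_continuous_on)
  define W1 where "W1 = upper_half_plane \<inter> \<phi> -` (- {0})"
  have oW1: "open W1" unfolding W1_def by (rule continuous_open_preimage[OF c1 open_upper_half_plane]) auto
  have neW1: "W1 \<noteq> {}" using n1 by (auto simp: W1_def)
  have W1H: "W1 \<subseteq> upper_half_plane" by (auto simp: W1_def)
  obtain z0 where z0: "z0 \<in> W1" "\<psi> z0 \<noteq> 0"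
  proof (rule ccontr)
    assume "\<not> thesis"
    then have allz: "\<forall>z\<in>W1. \<psi> z = 0" using that by blast
    have "\<forall>z\<in>upper_half_plane. \<psi> z = 0"
    proof
      fix z assume z: "z \<in> upper_half_plane"
      have hz: "(\<lambda>_. 0 :: complex) holomorphic_on upper_half_plane" by simp
      show "\<psi> z = 0"
        using analytic_continuation_open[OF oW1 open_upper_half_plane neW1 connected_upper_half_plane W1H h2 hz _ z] allz by blast
    qed
    then show False using n2 by blast
  qed
  define W where "W = W1 \<inter> (upper_half_plane \<inter> \<psi> -` (- {0}))"
  have oW2: "open (upper_half_plane \<inter> \<psi> -` (- {0}))" by (rule continuous_open_preimage[OF c2 open_upper_half_plane]) auto
  have oW: "open W" unfolding W_def using oW1 oW2 by auto
  have z0W: "z0 \<in> W" using z0 W1H by (auto simp: W_def)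
  obtain r where r: "r > 0" "ball z0 r \<subseteq> W" using oW z0W by (meson openE)
  have "ball z0 r \<subseteq> upper_half_plane" using r(2) by (auto simp: W_def W1_def)
  moreover have "\<forall>z\<in>ball z0 r. \<phi> z \<noteq> 0 \<and> \<psi> z \<noteq> 0" using r(2) by (auto simp: W_def W1_def)
  ultimately show ?thesis using r(1) by blast
qed

lemma power_ratio_constant_if_weighted_relation:
  fixes \<phi> \<psi> :: "complex \<Rightarrow> complex"
  assumes hom: "weighted_homogeneous u v M e0 L" and v: "v \<ge> 1"
    and L: "finite L" "L \<noteq> {}" "\<And>m. m \<in> L \<Longrightarrow> cf m \<noteq> 0"
    and hf: "\<phi> holomorphic_on upper_half_plane" and hg: "\<psi> holomorphic_on upper_half_plane"
    and nf: "\<exists>z\<in>upper_half_plane. \<phi> z \<noteq> 0" and ng: "\<exists>z\<in>upper_half_plane. \<psi> z \<noteq> 0"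
    and V: "\<And>z. z \<in> upper_half_plane \<Longrightarrow> poly3 L cf (\<phi> z) (\<psi> z) 1 = 0"
  shows "\<exists>C. \<forall>z\<in>upper_half_plane. \<psi> z \<noteq> 0 \<longrightarrow> \<phi> z ^ v / \<psi> z ^ u = C"
proof -
  obtain z0 r where B: "r > 0" "ball z0 r \<subseteq> upper_half_plane" "\<forall>z\<in>ball z0 r. \<phi> z \<noteq> 0 \<and> \<psi> z \<noteq> 0"
    using exists_ball_nonzero[OF hf hg nf ng] by blast
  have "continuous_on (ball z0 r) \<phi>" "continuous_on (ball z0 r) \<psi>"
    using holomorphic_on_imp_continuous_on[OF hf] holomorphic_on_imp_continuous_on[OF hg] B(2)
    by (auto intro: continuous_on_subset)
  then have "continuous_on (ball z0 r) (\<lambda>z. \<phi> z ^ v / \<psi> z ^ u)"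
    using B(3) by (intro continuous_intros) auto
  moreover have "finite ((\<lambda>z. \<phi> z ^ v / \<psi> z ^ u) ` ball z0 r)"
    by (rule finite_power_ratio_values[OF hom v L]) (use B V in auto)
  ultimately have "(\<lambda>z. \<phi> z ^ v / \<psi> z ^ u) constant_on ball z0 r"
    by (intro continuous_finite_range_constant) auto
  then obtain C where C: "\<forall>z\<in>ball z0 r. \<phi> z ^ v / \<psi> z ^ u = C" by (auto simp: constant_on_def)
  have "\<phi> z ^ v = C * \<psi> z ^ u" if z: "z \<in> upper_half_plane" for z
  proof (rule analytic_continuation_open[where s = "ball z0 r" and s' = upper_half_plane
        and f = "\<lambda>z. \<phi> z ^ v" and g = "\<lambda>z. C * \<psi> z ^ u"])
    show "(\<lambda>z. \<phi> z ^ v) holomorphic_on upper_half_plane" "(\<lambda>z. C * \<psi> z ^ u) holomorphic_on upper_half_plane"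
      using hf hg by (auto intro!: holomorphic_intros)
    show "\<phi> t ^ v = C * \<psi> t ^ u" if "t \<in> ball z0 r" for t
      using B(3) C that by (auto simp: field_simps)
    show "open (ball z0 r)" "ball z0 r \<noteq> {}" using B(1) by auto
  qed (use B(2) z open_upper_half_plane connected_upper_half_plane in auto)
  then show ?thesis by auto
qed

lemma poly3_drop_zero_coeffs:
  assumes "finite S"
  shows "poly3 {m\<in>S. cf m \<noteq> 0} cf x y t = poly3 S cf x y t"
  unfolding poly3_def by (rule sum.mono_neutral_left) (use assms in auto)

lemma weighted_top_part_of_relation:
  fixes p q :: "complex \<Rightarrow> complex poly" and \<phi> \<psi> :: "complex \<Rightarrow> complex"
  assumes fin: "finite S" and m1: "m1 \<in> S" "cf m1 \<noteq> 0"
    and deg: "\<And>z. degree (p z) \<le> u" "\<And>z. degree (q z) \<le> v"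
    and top: "\<And>z. Polynomial.coeff (p z) u = \<phi> z" "\<And>z. Polynomial.coeff (q z) v = \<psi> z"
    and V: "\<And>z X T. z \<in> A \<Longrightarrow> X \<noteq> 0 \<Longrightarrow> poly3 S cf (poly (p z) X) (poly (q z) X) T = 0"
  obtains M e0 L where "weighted_homogeneous u v M e0 L" "finite L" "L \<noteq> {}"
    "\<And>m. m \<in> L \<Longrightarrow> cf m \<noteq> 0" "\<And>z. z \<in> A \<Longrightarrow> poly3 L cf (\<phi> z) (\<psi> z) 1 = 0"
proof -
  define e0 where "e0 = snd (snd m1)"
  define S' where "S' = {m\<in>{m\<in>S. snd (snd m) = e0}. cf m \<noteq> 0}"
  define wt :: "nat \<times> nat \<times> nat \<Rightarrow> nat" where "wt = (\<lambda>(a, b, e). u * a + v * b)"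
  define M where "M = Max (wt ` S')"
  define L where "L = {(a, b, e)\<in>S'. u * a + v * b = M}"
  have finS': "finite S'" using fin by (simp add: S'_def)
  have m1S': "m1 \<in> S'" using m1 by (simp add: S'_def e0_def)
  have finE: "finite {m\<in>S. snd (snd m) = e0}" using fin by simp
  have "poly3 S' cf (poly (p z) X) (poly (q z) X) 1 = 0" if "z \<in> A" "X \<noteq> 0" for z X
    unfolding S'_def poly3_drop_zero_coeffs[OF finE]
    by (rule poly3_coeff_last_vanishes[OF fin V[OF that]])
  moreover have "u * a + v * b \<le> M" if "(a, b, e) \<in> S'" for a b e
  proof -
    have "wt (a, b, e) \<le> M" unfolding M_def using finS' that by (intro Max_ge imageI) auto
    then show ?thesis by (simp add: wt_def)
  qed
  ultimately have rel: "poly3 L cf (\<phi> z) (\<psi> z) 1 = 0" if "z \<in> A" for z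
    unfolding L_def top[symmetric] using that by (intro poly3_top_weight_vanishes finS' deg) auto
  have "M \<in> wt ` S'" unfolding M_def using finS' m1S' by (intro Max_in) auto
  then have "L \<noteq> {}" by (auto simp: L_def wt_def)
  moreover have "weighted_homogeneous u v M e0 L"
    by (auto simp: weighted_homogeneous_def L_def S'_def)
  moreover have "finite L" by (rule finite_subset[OF _ finS']) (auto simp: L_def)
  moreover have "cf m \<noteq> 0" if "m \<in> L" for m using that by (auto simp: L_def S'_def)
  ultimately show ?thesis using that rel by blast
qed

section \<open>Algebraic independence\<close>

lemma Gamma1_1_n_c: "(1, n, k * int N, k * int N * n + 1) \<in> Gamma1 N"
proof -
  have "[k * int N * n + 1 = 0 + 1] (mod int N)" "[k * int N = 0] (mod int N)"
    by (intro cong_add cong_refl, simp_all add: cong_def)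
  then show ?thesis unfolding Gamma1_def by (simp add: algebra_simps)
qed

lemma sum_modular_forms_moebius_act:
  assumes mf: "\<And>i. i \<ge> 1 \<Longrightarrow> modular_form N i (f i)"
    and "M \<in> Gamma1 N" "z \<in> upper_half_plane"
  shows "(\<Sum>i=1..u. f i (moebius_act M z)) = poly (graded_poly (\<lambda>i. f i z) u) (automorphy_factor M z)"
  unfolding poly_graded_poly
proof (rule sum.cong[OF refl])
  fix i assume "i \<in> {1..u}"
  then have "modular_form N i (f i)" using mf by simp
  then have "f i (moebius_act M z) = automorphy_factor M z ^ i * f i z"
    using assms(2,3) unfolding modular_form_def by blast
  then show "f i (moebius_act M z) = f i z * automorphy_factor M z ^ i" by (simp add: mult.commute)
qed

text \<open>Under \<open>z \<mapsto> z + n\<close> followed by \<open>z \<mapsto> z / (c z + 1)\<close> with \<open>N | c\<close>, the sums of modular forms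
  become polynomials in the automorphy factor \<open>X = c (z + n) + 1\<close>, and \<open>E\<^sub>2\<close> picks up \<open>-6 i c X / \<pi>\<close>;
  as \<open>n\<close> and \<open>c\<close> vary, a relation therefore becomes an identity in \<open>X\<close> and in the third argument.\<close>

lemma poly3_relation_everywhere:
  fixes f g h :: "nat \<Rightarrow> complex \<Rightarrow> complex"
  assumes N: "N \<ge> 1"
    and mf: "\<And>i. i \<ge> 1 \<Longrightarrow> modular_form N i (f i)"
    and mg: "\<And>i. i \<ge> 1 \<Longrightarrow> modular_form N i (g i)"
    and mh: "\<And>i. i \<ge> 1 \<Longrightarrow> modular_form N i (h i)"
    and fin: "finite S"
    and V: "\<And>z. z \<in> upper_half_plane \<Longrightarrow>
      poly3 S cf (\<Sum>i=1..u. f i z) (\<Sum>i=1..v. g i z) (Eisenstein_E2 z + (\<Sum>i=1..w. h i z)) = 0"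
    and z: "z \<in> upper_half_plane" and X: "X \<noteq> 0"
  shows "poly3 S cf (poly (graded_poly (\<lambda>i. f i z) u) X) (poly (graded_poly (\<lambda>i. g i z) v) X) T = 0"
proof (rule poly3_vanishes_everywhere[OF fin _ _ _ _ X])
  define \<kappa> :: complex where "\<kappa> = - 6 * \<i> / of_real pi"
  define K :: "complex set" where "K = range (\<lambda>k::nat. of_int (int (Suc k) * int N))"
  show "\<kappa> \<noteq> 0" by (simp add: \<kappa>_def)
  have "inj (\<lambda>k::nat. (of_int (int (Suc k) * int N) :: complex))"
    using N by (auto simp: inj_on_def)
  then show "infinite K" unfolding K_def using finite_imageD by blast
  show "0 \<notin> K"
  proof
    assume "0 \<in> K"
    then obtain k where "0 = (of_int (int (Suc k) * int N) :: complex)" unfolding K_def by blast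
    then have "int (Suc k) * int N = 0" by (metis of_int_eq_0_iff)
    then show False using N by simp
  qed
  show "let X = c * z + c * of_int n + 1 in
      poly3 S cf (poly (graded_poly (\<lambda>i. f i z) u) X) (poly (graded_poly (\<lambda>i. g i z) v) X)
        (X ^ 2 * Eisenstein_E2 z + \<kappa> * c * X + poly (graded_poly (\<lambda>i. h i z) w) X) = 0"
    if "c \<in> K" for c n
  proof -
    obtain k where c: "c = of_int (int (Suc k) * int N)" using \<open>c \<in> K\<close> by (auto simp: K_def)
    define M where "M = (1 :: int, n, int (Suc k) * int N, int (Suc k) * int N * n + 1)"
    have MG: "M \<in> Gamma1 N" unfolding M_def by (rule Gamma1_1_n_c)
    have yz: "Im z > 0" using z by (simp add: upper_half_plane_def)
    have "moebius_act M z \<in> upper_half_plane"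
      using Im_moebius_act_1_n_c[OF yz] by (simp add: M_def upper_half_plane_def mult.commute)
    from V[OF this] have "poly3 S cf (poly (graded_poly (\<lambda>i. f i z) u) (automorphy_factor M z))
        (poly (graded_poly (\<lambda>i. g i z) v) (automorphy_factor M z))
        (Eisenstein_E2 (moebius_act M z) + poly (graded_poly (\<lambda>i. h i z) w) (automorphy_factor M z)) = 0"
      by (simp only: sum_modular_forms_moebius_act[OF mf MG z]
          sum_modular_forms_moebius_act[OF mg MG z] sum_modular_forms_moebius_act[OF mh MG z])
    moreover have "Eisenstein_E2 (moebius_act M z) =
        automorphy_factor M z ^ 2 * Eisenstein_E2 z + \<kappa> * c * automorphy_factor M z"
      using Eisenstein_E2_moebius_act_1_n_c[OF yz, of n "int (Suc k) * int N"]
      by (simp add: M_def \<kappa>_def c mult.commute)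
    moreover have "automorphy_factor M z = c * z + c * of_int n + 1"
      by (simp add: M_def automorphy_factor_def c algebra_simps)
    ultimately show ?thesis by (simp only: Let_def)
  qed
qed

lemma alg_indep3_iff_poly3:
  "alg_indep3 f g h \<longleftrightarrow> (\<forall>S cf. finite S \<longrightarrow>
     (\<forall>z\<in>upper_half_plane. poly3 S cf (f z) (g z) (h z) = 0) \<longrightarrow> (\<forall>m\<in>S. cf m = 0))"
  by (simp add: alg_indep3_def poly3_def)

theorem lemma5p6:
  fixes N u v w :: nat
    and f g h :: "nat \<Rightarrow> complex \<Rightarrow> complex"
  assumes "N \<ge> 1"
    and "\<And>i. i \<ge> 1 \<Longrightarrow> modular_form N i (f i)"
    and "\<And>i. i \<ge> 1 \<Longrightarrow> modular_form N i (g i)"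
    and "\<And>i. i \<ge> 1 \<Longrightarrow> modular_form N i (h i)"
    and "u \<ge> 1" and "v \<ge> 1" and "w \<ge> 1"
    and "\<exists>z\<in>upper_half_plane. f u z \<noteq> 0"
    and "\<exists>z\<in>upper_half_plane. g v z \<noteq> 0"
    and "\<not> (\<exists>C. \<forall>z\<in>upper_half_plane. g v z \<noteq> 0 \<longrightarrow> f u z ^ v / g v z ^ u = C)"
  shows "alg_indep3 (\<lambda>z. \<Sum>i=1..u. f i z) (\<lambda>z. \<Sum>i=1..v. g i z)
           (\<lambda>z. Eisenstein_E2 z + (\<Sum>i=1..w. h i z))"
  unfolding alg_indep3_iff_poly3
proof (intro allI impI ballI)
  fix S :: "(nat \<times> nat \<times> nat) set" and cf :: "nat \<times> nat \<times> nat \<Rightarrow> complex" and m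
  assume fin: "finite S" and m: "m \<in> S"
  assume "\<forall>z\<in>upper_half_plane.
    poly3 S cf (\<Sum>i=1..u. f i z) (\<Sum>i=1..v. g i z) (Eisenstein_E2 z + (\<Sum>i=1..w. h i z)) = 0"
  from poly3_relation_everywhere[OF assms(1-4) fin] this
  have all_T: "poly3 S cf (poly (graded_poly (\<lambda>i. f i z) u) X) (poly (graded_poly (\<lambda>i. g i z) v) X) T = 0"
    if "z \<in> upper_half_plane" "X \<noteq> 0" for z X T
    using that by blast
  have hol: "f u holomorphic_on upper_half_plane" "g v holomorphic_on upper_half_plane"
    using assms(2,3,5,6) by (auto simp: modular_form_def)
  show "cf m = 0"
  proof (rule ccontr)
    assume "cf m \<noteq> 0"
    then show False
    proof (rule weighted_top_part_of_relation[where p = "\<lambda>z. graded_poly (\<lambda>i. f i z) u"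
          and q = "\<lambda>z. graded_poly (\<lambda>i. g i z) v" and A = upper_half_plane,
          OF fin m _ degree_graded_poly degree_graded_poly
          coeff_graded_poly_top[OF assms(5)] coeff_graded_poly_top[OF assms(6)] all_T])
      fix M e0 L
      assume "weighted_homogeneous u v M e0 L" "finite L" "L \<noteq> {}" "\<And>m. m \<in> L \<Longrightarrow> cf m \<noteq> 0"
        and "\<And>z. z \<in> upper_half_plane \<Longrightarrow> poly3 L cf (f u z) (g v z) 1 = 0"
      from power_ratio_constant_if_weighted_relation[OF this(1) assms(6) this(2-4) hol assms(8,9) this(5)]
      show False using assms(10) by blast
    qed
  qed
qed

end
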